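(* In the finite element setting described in the context (linear hexahedral elements for 3D elasticity, $m=24$), let $\beta\ge 0$ and, for each element $e$ with mass $m_e>0$, $$M_e=I_3\otimes \mathrm{M}_e,\quad \mathrm{M}_e=\frac{m_e}{8}I_8,\qquad E_e=I_3\otimes \mathrm{E}_e,\quad \mathrm{E}_e=\frac{\beta m_e}{56}\bigl(8I_8-\mathbf{e}\mathbf{e}^T\bigr),$$ where $\mathbf{e}\in\mathbb{R}^8$ is the vector of all ones (so $\mathrm{E}_e$ has diagonal entries $7\beta m_e/56$ and off-diagonal entries $-\beta m_e/56$), and $\overline{M}_e=M_e+E_e$. Let $M=\sum_eL_e^TM_eL_e$ and $\overline{M}=\sum_eL_e^T\overline{M}_eL_e$. Then for all $i=1,\dots,n$, $$1\le\frac{\omega_i}{\overline{\omega}_i}\le\sqrt{1+\tfrac{8}{7}\beta},\qquad \frac{\kappa(\overline{M})}{\kappa(M)}\le 1+\tfrac{8}{7}\beta,$$ where $\omega_i=\sqrt{\lambda_i(K,M)}$, $\overline{\omega}_i=\sqrt{\lambda_i(K,\overline{M})}$.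
   Context: Finite element setting: there are $n$ global degrees of freedom and $N$ elements, each with $m$ local degrees of freedom. For each element $e$, $L_e\in\mathbb{R}^{m\times n}$ satisfies $L_e^T=[\mathbf{e}_{i_1},\dots,\mathbf{e}_{i_m}]$ for distinct indices $i_1,\dots,i_m$ (columns of $I_n$), and every global index appears for at least one element. Element matrices are assembled as $A=\sum_{e=1}^N L_e^TA_eL_e$. The global stiffness matrix is $K=\sum_e L_e^TK_eL_e$ with each $K_e$ symmetric positive semidefinite, and $K$ is assumed symmetric positive definite. Generalized eigenvalues of a pair are numbered in ascending order. For a symmetric positive definite matrix $A$, $\kappa(A)=\lambda_{\max}(A)/\lambda_{\min}(A)$. $\otimes$ is the Kronecker product. *)

theory Defs
  imports "Jordan_Normal_Form.Spectral_Radius" "HOL-Library.Multiset"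
begin

definition sym_psd :: "nat \<Rightarrow> real mat \<Rightarrow> bool" where
  "sym_psd k A \<longleftrightarrow> A \<in> carrier_mat k k \<and> transpose_mat A = A \<and>
     (\<forall>v \<in> carrier_vec k. 0 \<le> v \<bullet> (A *\<^sub>v v))"

definition sym_pd :: "nat \<Rightarrow> real mat \<Rightarrow> bool" where
  "sym_pd k A \<longleftrightarrow> A \<in> carrier_mat k k \<and> transpose_mat A = A \<and>
     (\<forall>v \<in> carrier_vec k. v \<noteq> 0\<^sub>v k \<longrightarrow> 0 < v \<bullet> (A *\<^sub>v v))"

definition kron :: "real mat \<Rightarrow> real mat \<Rightarrow> real mat" where
  "kron A B = mat (dim_row A * dim_row B) (dim_col A * dim_col B)
     (\<lambda>(i,j). A $$ (i div dim_row B, j div dim_col B) * B $$ (i mod dim_row B, j mod dim_col B))"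

definition bool_mat :: "nat \<Rightarrow> nat \<Rightarrow> (nat \<Rightarrow> nat) \<Rightarrow> real mat" where
  "bool_mat m n idx = mat m n (\<lambda>(k,j). if j = idx k then 1 else 0)"

definition assemble :: "nat \<Rightarrow> nat \<Rightarrow> (nat \<Rightarrow> real mat) \<Rightarrow> (nat \<Rightarrow> real mat) \<Rightarrow> real mat" where
  "assemble n N L A = mat n n (\<lambda>(i,j). \<Sum>e<N. (transpose_mat (L e) * A e * L e) $$ (i,j))"

text \<open>Generalized eigenvalues of the pair (K,M): roots of det(lambda M - K), with multiplicity,
  in ascending order; gen_eig K M i is the i-th one (1-based).\<close>
definition gen_char_poly :: "real mat \<Rightarrow> real mat \<Rightarrow> real poly" where
  "gen_char_poly K M = det (map_mat (\<lambda>b. [:0, b:]) M + map_mat (\<lambda>a. [:- a:]) K)"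

definition gen_eig :: "real mat \<Rightarrow> real mat \<Rightarrow> nat \<Rightarrow> real" where
  "gen_eig K M i = sorted_list_of_multiset (proots (gen_char_poly K M)) ! (i - 1)"

definition cond :: "real mat \<Rightarrow> real" where
  "cond A = Max (spectrum A) / Min (spectrum A)"

end

theory Submission
  imports Defs
begin

(* The lumping perturbation beta m_e/56 * (I_3 (x) (8 I_8 - e e^T)) is positive semidefinite and,
   by Cauchy-Schwarz (sum z)^2 <= 8 |z|^2, at most beta m_e/7 * I; assembly preserves such
   comparisons, so M <= Mbar <= (1 + 8/7 beta) M as quadratic forms.  By a Courant-Fischer argument the i-th generalized eigenvalue of (K, A) is
   antitone in A, whence lambda_i(K, Mbar) <= lambda_i(K, M) <= (1 + 8/7 beta) lambda_i(K, Mbar).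
   The extreme eigenvalues of Mbar are Rayleigh quotients, hence lie in
   [lambda_min(M), (1 + 8/7 beta) lambda_max(M)].
   The generalized eigenvalues are defined as the roots of det(t A - K); they are identified with
   the eigenvalues of an A-orthonormal eigenbasis of (K, A), built one vector at a time: A^-1 K
   leaves the A-orthogonal complement of the vectors found so far invariant, has a complex
   eigenvector there (Krylov vectors plus the fundamental theorem of algebra), and symmetry makes
   its real or imaginary part a real generalized eigenvector. *)

lemma mult_mat_vec_zero [simp]:
  "A \<in> carrier_mat n m \<Longrightarrow> A *\<^sub>v 0\<^sub>v m = (0\<^sub>v n :: 'a :: comm_ring_1 vec)"
  by (rule eq_vecI) auto

lemma nonzero_vec_nonzero_entry:
  assumes "x \<in> carrier_vec n" and "x \<noteq> 0\<^sub>v n"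
  obtains i where "i < n" and "x $ i \<noteq> 0"
  using assms by (metis carrier_vecD eq_vecI index_zero_vec(1,2))

lemma smult_vec_eq_zero_cancel:
  fixes x :: "'a :: field vec"
  assumes "c \<cdot>\<^sub>v x = 0\<^sub>v n" and "c \<noteq> 0" and "x \<in> carrier_vec n"
  shows "x = 0\<^sub>v n"
proof (rule eq_vecI)
  fix i assume i: "i < dim_vec (0\<^sub>v n :: 'a vec)"
  then have "c * x $ i = 0"
    using assms(1,3) by (metis carrier_vecD index_smult_vec(1) index_zero_vec(1,2))
  then show "x $ i = 0\<^sub>v n $ i" using assms(2) i by simp
qed (use assms in auto)

lemma wide_mat_kernel_nonzero:
  fixes C :: "'a :: field mat"
  assumes C: "C \<in> carrier_mat r c" and rc: "r < c"
  obtains x where "x \<in> carrier_vec c" "x \<noteq> 0\<^sub>v c" "C *\<^sub>v x = 0\<^sub>v r"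
proof -
  \<comment> \<open>pad C with zero rows to a singular square matrix\<close>
  define C' where "C' = mat c c (\<lambda>(i,j). if i < r then C $$ (i,j) else 0)"
  have C': "C' \<in> carrier_mat c c" unfolding C'_def by auto
  have "C' = mat\<^sub>r c c (\<lambda>i. if i = c - 1 then 0\<^sub>v c else row C' i)"
    using rc C by (intro eq_matI) (auto simp: C'_def)
  also have "det \<dots> = 0"
    using rc C' by (intro det_row_0) auto
  finally obtain x where x: "x \<in> carrier_vec c" "x \<noteq> 0\<^sub>v c" "C' *\<^sub>v x = 0\<^sub>v c"
    using det_0_iff_vec_prod_zero_field[OF C'] by auto
  have "C *\<^sub>v x = 0\<^sub>v r"
  proof (rule eq_vecI)
    fix i assume i: "i < dim_vec (0\<^sub>v r :: 'a vec)"
    then have "(C *\<^sub>v x) $ i = (C' *\<^sub>v x) $ i"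
      using rc C x(1) by (auto simp: C'_def scalar_prod_def intro!: sum.cong)
    also have "\<dots> = 0" using x(3) i rc by simp
    finally show "(C *\<^sub>v x) $ i = 0\<^sub>v r $ i" using i by simp
  qed (use C in auto)
  with x that show thesis by blast
qed

lemma exists_nonzero_orthogonal_vec:
  fixes f :: "nat \<Rightarrow> 'a :: field vec"
  assumes kn: "k < n" and f: "\<And>j. j < k \<Longrightarrow> f j \<in> carrier_vec n"
  obtains w where "w \<in> carrier_vec n" "w \<noteq> 0\<^sub>v n" "\<And>j. j < k \<Longrightarrow> f j \<bullet> w = 0"
proof -
  define C where "C = mat k n (\<lambda>(j,i). f j $ i)"
  obtain w where w: "w \<in> carrier_vec n" "w \<noteq> 0\<^sub>v n" "C *\<^sub>v w = 0\<^sub>v k"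
    using wide_mat_kernel_nonzero[of C k n] kn unfolding C_def by auto
  have "f j \<bullet> w = (C *\<^sub>v w) $ j" if "j < k" for j
    using that w(1) f[OF that] by (auto simp: C_def scalar_prod_def)
  with w that show thesis by simp
qed

lemma scalar_prod_sym_mat_swap:
  fixes A :: "'a :: comm_ring_1 mat"
  assumes A: "A \<in> carrier_mat n n" "transpose_mat A = A"
    and x: "x \<in> carrier_vec n" and y: "y \<in> carrier_vec n"
  shows "x \<bullet> (A *\<^sub>v y) = y \<bullet> (A *\<^sub>v x)"
proof -
  have "x \<bullet> (A *\<^sub>v y) = (transpose_mat A *\<^sub>v x) \<bullet> y"
    using transpose_vec_mult_scalar[of A n n y x] A x y by auto
  also have "\<dots> = y \<bullet> (A *\<^sub>v x)" using A x y by (simp add: comm_scalar_prod[of _ n])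
  finally show ?thesis .
qed

lemma sym_pd_det_nonzero:
  assumes A: "sym_pd n A"
  shows "det A \<noteq> 0"
proof
  have Ac: "A \<in> carrier_mat n n" using A by (auto simp: sym_pd_def)
  assume "det A = 0"
  then obtain v where "v \<in> carrier_vec n" "v \<noteq> 0\<^sub>v n" "A *\<^sub>v v = 0\<^sub>v n"
    using det_0_iff_vec_prod_zero_field[OF Ac] by auto
  with A show False by (auto simp: sym_pd_def)
qed

lemma sym_pd_right_inverse:
  assumes A: "sym_pd n A"
  obtains B where "B \<in> carrier_mat n n" "A * B = 1\<^sub>m n"
proof -
  have Ac: "A \<in> carrier_mat n n" using A by (auto simp: sym_pd_def)
  from det_non_zero_imp_unit[OF Ac sym_pd_det_nonzero[OF A], of "()"] that
  show thesis unfolding Units_def ring_mat_def by auto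
qed

lemma sym_pd_one_mat: "sym_pd n (1\<^sub>m n)"
proof -
  have "0 < v \<bullet> v" if v: "v \<in> carrier_vec n" "v \<noteq> 0\<^sub>v n" for v :: "real vec"
  proof -
    obtain i where i: "i < n" "v $ i \<noteq> 0" using nonzero_vec_nonzero_entry[OF v] .
    have "v \<bullet> v = (\<Sum>j\<in>{0..<n}. (v $ j)^2)" using v by (simp add: scalar_prod_def power2_eq_square)
    also have "\<dots> > 0" using i by (intro sum_pos2[of _ i]) auto
    finally show ?thesis .
  qed
  then show ?thesis unfolding sym_pd_def by auto
qed

lemma smult_mat_mult_mat_vec:
  "A \<in> carrier_mat nr nc \<Longrightarrow> v \<in> carrier_vec nc \<Longrightarrow> (k \<cdot>\<^sub>m A) *\<^sub>v v = k \<cdot>\<^sub>v (A *\<^sub>v v)"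
  by (intro eq_vecI) (auto simp: scalar_prod_def sum_distrib_left ac_simps)

lemma transpose_mult_mult_index:
  fixes V M :: "'a :: comm_ring_1 mat"
  assumes V: "V \<in> carrier_mat n n" and M: "M \<in> carrier_mat n n" and i: "i < n" and j: "j < n"
  shows "(transpose_mat V * M * V) $$ (i,j) = col V i \<bullet> (M *\<^sub>v col V j)"
proof -
  have "transpose_mat V * M * V = transpose_mat V * (M * V)"
    using V M by (metis assoc_mult_mat transpose_carrier_mat)
  then show ?thesis using V M i j by (simp add: col_mult2[OF M V j])
qed

lemma quad_form_expand:
  assumes "M \<in> carrier_mat n n" and "x \<in> carrier_vec n"
  shows "x \<bullet> (M *\<^sub>v x) = (\<Sum>i<n. \<Sum>j<n. x $ i * M $$ (i,j) * x $ j)"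
  using assms
  by (auto simp: scalar_prod_def lessThan_atLeast0 sum_distrib_left ac_simps intro!: sum.cong)

lemma sum_lessThan_add: "(\<Sum>k<(m::nat) + p. f k) = (\<Sum>k<m. f k) + (\<Sum>k<p. f (m + k))"
  by (induct p) (auto simp: add.assoc)

section \<open>Eigenvectors in invariant subspaces\<close>

definition vec_subspace :: "nat \<Rightarrow> 'a :: comm_ring_1 vec set \<Rightarrow> bool" where
  "vec_subspace n S \<longleftrightarrow> S \<subseteq> carrier_vec n \<and> 0\<^sub>v n \<in> S \<and>
     (\<forall>x \<in> S. \<forall>c. c \<cdot>\<^sub>v x \<in> S) \<and> (\<forall>x \<in> S. \<forall>y \<in> S. x + y \<in> S)"

fun horner_mat_vec :: "'a :: comm_ring_1 mat \<Rightarrow> nat \<Rightarrow> 'a list \<Rightarrow> 'a vec \<Rightarrow> 'a vec" where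
  "horner_mat_vec T n [] u = 0\<^sub>v n"
| "horner_mat_vec T n (a # as) u = a \<cdot>\<^sub>v u + T *\<^sub>v horner_mat_vec T n as u"

definition poly_mat_vec :: "'a :: comm_ring_1 mat \<Rightarrow> nat \<Rightarrow> 'a poly \<Rightarrow> 'a vec \<Rightarrow> 'a vec" where
  "poly_mat_vec T n p u = horner_mat_vec T n (coeffs p) u"

context
  fixes T :: "'a :: comm_ring_1 mat" and n :: nat
  assumes T: "T \<in> carrier_mat n n"
begin

lemma horner_mat_vec_carrier [simp]: "u \<in> carrier_vec n \<Longrightarrow> horner_mat_vec T n as u \<in> carrier_vec n"
  by (induct as) (use T in auto)

lemma poly_mat_vec_carrier [simp]: "u \<in> carrier_vec n \<Longrightarrow> poly_mat_vec T n p u \<in> carrier_vec n"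
  unfolding poly_mat_vec_def by simp

lemma poly_mat_vec_dim [simp]: "u \<in> carrier_vec n \<Longrightarrow> dim_vec (poly_mat_vec T n p u) = n"
  by (metis carrier_vecD poly_mat_vec_carrier)

lemma poly_mat_vec_0 [simp]: "poly_mat_vec T n 0 u = 0\<^sub>v n"
  unfolding poly_mat_vec_def by simp

lemma poly_mat_vec_pCons:
  assumes u: "u \<in> carrier_vec n"
  shows "poly_mat_vec T n (pCons a p) u = a \<cdot>\<^sub>v u + T *\<^sub>v poly_mat_vec T n p u"
proof (cases "p = 0 \<and> a = 0")
  case True
  then show ?thesis using u T by (auto simp: poly_mat_vec_def)
next
  case False
  then have "coeffs (pCons a p) = a # coeffs p" by (auto simp: coeffs_pCons_eq_cCons cCons_def)
  then show ?thesis unfolding poly_mat_vec_def by simp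
qed

lemma poly_mat_vec_pCons_index:
  assumes u: "u \<in> carrier_vec n" and i: "i < n"
  shows "poly_mat_vec T n (pCons a p) u $ i = a * u $ i + row T i \<bullet> poly_mat_vec T n p u"
  unfolding poly_mat_vec_pCons[OF u] using u i T by simp

lemma poly_mat_vec_add:
  assumes u: "u \<in> carrier_vec n"
  shows "poly_mat_vec T n (p + q) u = poly_mat_vec T n p u + poly_mat_vec T n q u"
proof (induct p arbitrary: q rule: pCons_induct)
  case (pCons a p q)
  obtain b q' where q: "q = pCons b q'" by (cases q) auto
  show ?case
  proof (rule eq_vecI)
    fix i assume "i < dim_vec (poly_mat_vec T n (pCons a p) u + poly_mat_vec T n q u)"
    then have i: "i < n" using u by simp
    then show "poly_mat_vec T n (pCons a p + q) u $ i
      = (poly_mat_vec T n (pCons a p) u + poly_mat_vec T n q u) $ i"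
      unfolding q add_pCons using u T pCons(2)[of q']
      by (simp add: poly_mat_vec_pCons_index scalar_prod_add_distrib[of _ n] algebra_simps)
  qed (use u in auto)
qed (use u in simp)

lemma poly_mat_vec_smult:
  assumes u: "u \<in> carrier_vec n"
  shows "poly_mat_vec T n (Polynomial.smult c p) u = c \<cdot>\<^sub>v poly_mat_vec T n p u"
proof (induct p rule: pCons_induct)
  case (pCons a p)
  show ?case
  proof (rule eq_vecI)
    fix i assume "i < dim_vec (c \<cdot>\<^sub>v poly_mat_vec T n (pCons a p) u)"
    then have i: "i < n" using u by simp
    then show "poly_mat_vec T n (Polynomial.smult c (pCons a p)) u $ i
      = (c \<cdot>\<^sub>v poly_mat_vec T n (pCons a p) u) $ i"
      using u T pCons(2) by (simp add: poly_mat_vec_pCons_index algebra_simps)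
  qed (use u in auto)
qed (use u in auto)

lemma poly_mat_vec_mult:
  assumes u: "u \<in> carrier_vec n"
  shows "poly_mat_vec T n (p * q) u = poly_mat_vec T n p (poly_mat_vec T n q u)"
proof (induct p rule: pCons_induct)
  case (pCons a p)
  have qu: "poly_mat_vec T n q u \<in> carrier_vec n" using u by simp
  show ?case
  proof (rule eq_vecI)
    fix i assume "i < dim_vec (poly_mat_vec T n (pCons a p) (poly_mat_vec T n q u))"
    then have i: "i < n" using qu by simp
    then show "poly_mat_vec T n (pCons a p * q) u $ i
      = poly_mat_vec T n (pCons a p) (poly_mat_vec T n q u) $ i"
      unfolding mult_pCons_left poly_mat_vec_add[OF u] poly_mat_vec_smult[OF u]
      using u T pCons(2) qu by (simp add: poly_mat_vec_pCons_index poly_mat_vec_pCons)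
  qed (use u in auto)
qed (use u in auto)

lemma poly_mat_vec_one: "u \<in> carrier_vec n \<Longrightarrow> poly_mat_vec T n 1 u = u"
  unfolding one_pCons using T by (simp add: poly_mat_vec_pCons)

lemma poly_mat_vec_linear:
  assumes u: "u \<in> carrier_vec n"
  shows "poly_mat_vec T n [:- z, 1:] u = T *\<^sub>v u - z \<cdot>\<^sub>v u"
  unfolding poly_mat_vec_pCons[OF u] poly_mat_vec_one[OF u] using u T
  by (intro eq_vecI) auto

lemma poly_mat_vec_monom_Suc:
  assumes u: "u \<in> carrier_vec n"
  shows "poly_mat_vec T n (monom 1 (Suc k)) u = T *\<^sub>v poly_mat_vec T n (monom 1 k) u"
  unfolding monom_Suc poly_mat_vec_pCons[OF u] using u T by (intro eq_vecI) auto

lemma poly_mat_vec_Poly_index: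
  assumes u: "u \<in> carrier_vec n" and i: "i < n"
  shows "poly_mat_vec T n (Poly cs) u $ i = (\<Sum>k<length cs. cs ! k * poly_mat_vec T n (monom 1 k) u $ i)"
  using i
proof (induct cs arbitrary: i)
  case (Cons a cs i)
  let ?v = "\<lambda>k. poly_mat_vec T n (monom 1 k) u"
  have "row T i \<bullet> poly_mat_vec T n (Poly cs) u = (\<Sum>j<n. T $$ (i,j) * poly_mat_vec T n (Poly cs) u $ j)"
    using T u Cons(2) by (auto simp: scalar_prod_def lessThan_atLeast0)
  also have "\<dots> = (\<Sum>j<n. T $$ (i,j) * (\<Sum>k<length cs. cs ! k * ?v k $ j))"
    using Cons(1) by simp
  also have "\<dots> = (\<Sum>k<length cs. cs ! k * (\<Sum>j<n. T $$ (i,j) * ?v k $ j))"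
    by (simp add: sum_distrib_left sum_distrib_right algebra_simps sum.swap[of _ "{..<n}"])
  also have "\<dots> = (\<Sum>k<length cs. cs ! k * ?v (Suc k) $ i)"
    unfolding poly_mat_vec_monom_Suc[OF u] using T u Cons(2)
    by (intro sum.cong refl) (auto simp: scalar_prod_def lessThan_atLeast0)
  finally have "poly_mat_vec T n (Poly (a # cs)) u $ i
      = a * u $ i + (\<Sum>k<length cs. cs ! k * ?v (Suc k) $ i)"
    using poly_mat_vec_pCons_index[OF u Cons(2)] by simp
  moreover have "?v 0 = u" using poly_mat_vec_one[OF u] by (simp add: one_pCons monom_0)
  ultimately show ?case unfolding length_Cons sum.lessThan_Suc_shift by simp
qed simp

lemma poly_mat_vec_in_subspace:
  assumes S: "vec_subspace n S" and ST: "\<And>x. x \<in> S \<Longrightarrow> T *\<^sub>v x \<in> S" and u: "u \<in> S"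
  shows "poly_mat_vec T n p u \<in> S"
proof (induct p rule: pCons_induct)
  case (pCons a p)
  have "u \<in> carrier_vec n" using u S by (auto simp: vec_subspace_def)
  then show ?case
    unfolding poly_mat_vec_pCons[OF \<open>u \<in> carrier_vec n\<close>]
    using S ST u pCons(2) by (simp add: vec_subspace_def)
qed (use S in \<open>simp add: vec_subspace_def\<close>)

text \<open>Peel off the factors one at a time: the last nonzero partial product applied to \<open>u\<close> is an
  eigenvector.\<close>

lemma eigenvector_of_linear_factors_annihilator:
  assumes S: "vec_subspace n S" and ST: "\<And>x. x \<in> S \<Longrightarrow> T *\<^sub>v x \<in> S"
  shows "u \<in> S \<Longrightarrow> u \<noteq> 0\<^sub>v n \<Longrightarrow> poly_mat_vec T n (\<Prod>z\<leftarrow>zs. [:- z, 1:]) u = 0\<^sub>v n \<Longrightarrow>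
    \<exists>y z. y \<in> S \<and> y \<noteq> 0\<^sub>v n \<and> T *\<^sub>v y = z \<cdot>\<^sub>v y"
proof (induct zs)
  case Nil
  then show ?case using poly_mat_vec_one[of u] S by (auto simp: vec_subspace_def)
next
  case (Cons z zs)
  have uc: "u \<in> carrier_vec n" using Cons S by (auto simp: vec_subspace_def)
  define y where "y = poly_mat_vec T n (\<Prod>z\<leftarrow>zs. [:- z, 1:]) u"
  have yS: "y \<in> S" unfolding y_def by (rule poly_mat_vec_in_subspace[OF S ST Cons(2)])
  have yc: "y \<in> carrier_vec n" using yS S by (auto simp: vec_subspace_def)
  show ?case
  proof (cases "y = 0\<^sub>v n")
    case True
    then show ?thesis using Cons unfolding y_def by auto
  next
    case False
    have "poly_mat_vec T n [:- z, 1:] y = 0\<^sub>v n"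
      using Cons(4) unfolding y_def poly_mat_vec_mult[OF uc, symmetric] by simp
    then have "T *\<^sub>v y - z \<cdot>\<^sub>v y = 0\<^sub>v n" unfolding poly_mat_vec_linear[OF yc] .
    moreover have "T *\<^sub>v y = (T *\<^sub>v y - z \<cdot>\<^sub>v y) + z \<cdot>\<^sub>v y"
      using yc T by (intro eq_vecI) auto
    ultimately have "T *\<^sub>v y = z \<cdot>\<^sub>v y" using yc by simp
    then show ?thesis using yS False by blast
  qed
qed

end

text \<open>The Krylov vectors \<open>w, T w, \<dots>, T\<^sup>n w\<close> are dependent, so some nonzero polynomial \<open>p\<close> has \<open>p(T) w = 0\<close>; now factor
  \<open>p\<close> into linear factors.\<close>

lemma invariant_subspace_eigenvector:
  fixes T :: "complex mat"
  assumes T: "T \<in> carrier_mat n n" and S: "vec_subspace n S"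
    and ST: "\<And>x. x \<in> S \<Longrightarrow> T *\<^sub>v x \<in> S" and w: "w \<in> S" "w \<noteq> 0\<^sub>v n"
  obtains y z where "y \<in> S" "y \<noteq> 0\<^sub>v n" "T *\<^sub>v y = z \<cdot>\<^sub>v y"
proof -
  have wc: "w \<in> carrier_vec n" using w S by (auto simp: vec_subspace_def)
  define Kr where "Kr = mat n (Suc n) (\<lambda>(i,k). poly_mat_vec T n (monom 1 k) w $ i)"
  have Kr: "Kr \<in> carrier_mat n (Suc n)" unfolding Kr_def by auto
  obtain c where c: "c \<in> carrier_vec (Suc n)" "c \<noteq> 0\<^sub>v (Suc n)" "Kr *\<^sub>v c = 0\<^sub>v n"
    using wide_mat_kernel_nonzero[OF Kr] by blast
  define p where "p = Poly (list_of_vec c)"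
  have coeff_p: "coeff p k = c $ k" if "k < Suc n" for k
    using that c(1) by (simp add: p_def nth_default_def)
  have "poly_mat_vec T n p w = 0\<^sub>v n"
  proof (rule eq_vecI)
    fix i assume "i < dim_vec (0\<^sub>v n :: complex vec)"
    then have i: "i < n" by simp
    have "poly_mat_vec T n p w $ i = (\<Sum>k<Suc n. c $ k * poly_mat_vec T n (monom 1 k) w $ i)"
      unfolding p_def poly_mat_vec_Poly_index[OF T wc i] using c(1) by simp
    also have "\<dots> = (Kr *\<^sub>v c) $ i" using i c(1)
      by (auto simp: Kr_def scalar_prod_def lessThan_atLeast0 mult.commute intro!: sum.cong)
    finally show "poly_mat_vec T n p w $ i = 0\<^sub>v n $ i" using c(3) i by simp
  qed (use T wc in auto)
  moreover have p0: "p \<noteq> 0"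
  proof
    assume "p = 0"
    then have "c = 0\<^sub>v (Suc n)" using coeff_p c(1) by (intro eq_vecI) auto
    with c(2) show False by simp
  qed
  moreover obtain zs where factors: "Polynomial.smult (lead_coeff p) (\<Prod>z\<leftarrow>zs. [:- z, 1:]) = p"
    using fundamental_theorem_algebra_factorized[of p] by auto
  ultimately have scaled: "lead_coeff p \<cdot>\<^sub>v poly_mat_vec T n (\<Prod>z\<leftarrow>zs. [:- z, 1:]) w = 0\<^sub>v n"
    unfolding poly_mat_vec_smult[OF T wc, symmetric] factors by simp
  have "poly_mat_vec T n (\<Prod>z\<leftarrow>zs. [:- z, 1:]) w = 0\<^sub>v n"
    by (rule smult_vec_eq_zero_cancel[OF scaled]) (use p0 T wc in auto)
  with eigenvector_of_linear_factors_annihilator[OF T S ST w] that show thesis by blast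
qed

section \<open>The symmetric generalized eigenproblem\<close>

abbreviation cV :: "real vec \<Rightarrow> complex vec" where "cV \<equiv> map_vec complex_of_real"
abbreviation cM :: "real mat \<Rightarrow> complex mat" where "cM \<equiv> map_mat complex_of_real"

lemma Re_scalar_prod_of_real:
  "f \<in> carrier_vec n \<Longrightarrow> y \<in> carrier_vec n \<Longrightarrow> Re (cV f \<bullet> y) = f \<bullet> map_vec Re y"
  by (simp add: scalar_prod_def Re_sum)

lemma Im_scalar_prod_of_real:
  "f \<in> carrier_vec n \<Longrightarrow> y \<in> carrier_vec n \<Longrightarrow> Im (cV f \<bullet> y) = f \<bullet> map_vec Im y"
  by (simp add: scalar_prod_def Im_sum)

lemma scalar_prod_of_real: "dim_vec y = dim_vec x \<Longrightarrow> cV x \<bullet> cV y = complex_of_real (x \<bullet> y)"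
  unfolding scalar_prod_def by (simp add: of_real_sum)

lemma Re_Im_mult_mat_vec_of_real:
  assumes T: "T \<in> carrier_mat n n" and y: "y \<in> carrier_vec n"
  shows "map_vec Re (cM T *\<^sub>v y) = T *\<^sub>v map_vec Re y"
    and "map_vec Im (cM T *\<^sub>v y) = T *\<^sub>v map_vec Im y"
proof -
  have row: "row (cM T) i = cV (row T i)" if "i < n" for i
    using that T by (intro eq_vecI) auto
  show "map_vec Re (cM T *\<^sub>v y) = T *\<^sub>v map_vec Re y"
    using T y row Re_scalar_prod_of_real[of _ n y] by (intro eq_vecI) auto
  show "map_vec Im (cM T *\<^sub>v y) = T *\<^sub>v map_vec Im y"
    using T y row Im_scalar_prod_of_real[of _ n y] by (intro eq_vecI) auto
qed

definition gen_eigsys :: "nat \<Rightarrow> real mat \<Rightarrow> real mat \<Rightarrow> nat \<Rightarrow> (nat \<Rightarrow> real vec) \<Rightarrow> (nat \<Rightarrow> real) \<Rightarrow> bool" where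
  "gen_eigsys n K A k v l \<longleftrightarrow> (\<forall>j<k. v j \<in> carrier_vec n \<and> K *\<^sub>v v j = l j \<cdot>\<^sub>v (A *\<^sub>v v j)) \<and>
     (\<forall>i<k. \<forall>j<k. v i \<bullet> (A *\<^sub>v v j) = (if i = j then 1 else 0))"

lemma gen_eigsysD:
  assumes "gen_eigsys n K A k v l" and "j < k"
  shows "v j \<in> carrier_vec n" "K *\<^sub>v v j = l j \<cdot>\<^sub>v (A *\<^sub>v v j)" "v j \<bullet> (A *\<^sub>v v j) = 1"
  using assms by (auto simp: gen_eigsys_def)

lemma gen_eigsys_orthonormal:
  "gen_eigsys n K A k v l \<Longrightarrow> i < k \<Longrightarrow> j < k \<Longrightarrow> v i \<bullet> (A *\<^sub>v v j) = (if i = j then 1 else 0)"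
  by (auto simp: gen_eigsys_def)

text \<open>Symmetry of \<open>K\<close> and \<open>A\<close> forces \<open>z\<close> to be real, so the real or the imaginary part of \<open>y\<close>
  is a real generalized eigenvector.\<close>

lemma real_gen_eigenvector_of_complex:
  assumes K: "K \<in> carrier_mat n n" "transpose_mat K = K" and A: "sym_pd n A"
    and T: "T \<in> carrier_mat n n" "A * T = K"
    and y: "y \<in> carrier_vec n" "y \<noteq> 0\<^sub>v n" "cM T *\<^sub>v y = z \<cdot>\<^sub>v y"
  obtains x where "x = map_vec Re y \<or> x = map_vec Im y" "x \<noteq> 0\<^sub>v n" "K *\<^sub>v x = Re z \<cdot>\<^sub>v (A *\<^sub>v x)"
proof -
  have Ac: "A \<in> carrier_mat n n" "transpose_mat A = A"
    and Apd: "\<And>x. x \<in> carrier_vec n \<Longrightarrow> x \<noteq> 0\<^sub>v n \<Longrightarrow> 0 < x \<bullet> (A *\<^sub>v x)"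
    using A by (auto simp: sym_pd_def)
  define a where "a = map_vec Re y"
  define b where "b = map_vec Im y"
  have ab: "a \<in> carrier_vec n" "b \<in> carrier_vec n" using y(1) unfolding a_def b_def by auto
  have Ta: "T *\<^sub>v a = Re z \<cdot>\<^sub>v a - Im z \<cdot>\<^sub>v b"
    unfolding a_def Re_Im_mult_mat_vec_of_real(1)[OF T(1) y(1), symmetric] y(3) b_def
    using y(1) by (intro eq_vecI) auto
  have Tb: "T *\<^sub>v b = Im z \<cdot>\<^sub>v a + Re z \<cdot>\<^sub>v b"
    unfolding b_def Re_Im_mult_mat_vec_of_real(2)[OF T(1) y(1), symmetric] y(3) a_def
    using y(1) by (intro eq_vecI) auto
  have ab0: "a \<noteq> 0\<^sub>v n \<or> b \<noteq> 0\<^sub>v n"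
  proof (rule ccontr)
    assume "\<not> ?thesis"
    then have "y = 0\<^sub>v n"
      using y(1) by (intro eq_vecI) (auto simp: a_def b_def complex_eq_iff dest!: vec_eq_iff[THEN iffD1])
    with y(2) show False by simp
  qed
  have KT: "K *\<^sub>v x = A *\<^sub>v (T *\<^sub>v x)" if "x \<in> carrier_vec n" for x
    using T Ac that by (metis assoc_mult_mat_vec)
  have "a \<bullet> (K *\<^sub>v b) = Im z * (a \<bullet> (A *\<^sub>v a)) + Re z * (a \<bullet> (A *\<^sub>v b))"
    unfolding KT[OF ab(2)] Tb using ab Ac
    by (simp add: mult_add_distrib_mat_vec[of _ n n] scalar_prod_add_distrib[of _ n] mult_mat_vec)
  moreover have "b \<bullet> (K *\<^sub>v a) = Re z * (b \<bullet> (A *\<^sub>v a)) - Im z * (b \<bullet> (A *\<^sub>v b))"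
    unfolding KT[OF ab(1)] Ta using ab Ac
    by (simp add: mult_minus_distrib_mat_vec[of _ n n] scalar_prod_minus_distrib[of _ n] mult_mat_vec)
  moreover have "a \<bullet> (A *\<^sub>v b) = b \<bullet> (A *\<^sub>v a)" "a \<bullet> (K *\<^sub>v b) = b \<bullet> (K *\<^sub>v a)"
    using scalar_prod_sym_mat_swap[OF Ac ab] scalar_prod_sym_mat_swap[OF K ab] by auto
  ultimately have "Im z * (a \<bullet> (A *\<^sub>v a) + b \<bullet> (A *\<^sub>v b)) = 0"
    by (simp add: algebra_simps)
  moreover have "0 < a \<bullet> (A *\<^sub>v a) + b \<bullet> (A *\<^sub>v b)"
    using ab0 Apd ab Ac by (cases "a = 0\<^sub>v n"; cases "b = 0\<^sub>v n") (auto intro: add_pos_pos)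
  ultimately have "Im z = 0" by simp
  define x where "x = (if a \<noteq> 0\<^sub>v n then a else b)"
  have "T *\<^sub>v x = Re z \<cdot>\<^sub>v x"
    unfolding x_def using Ta Tb \<open>Im z = 0\<close> ab by (auto intro!: eq_vecI)
  then have "K *\<^sub>v x = Re z \<cdot>\<^sub>v (A *\<^sub>v x)"
    using KT ab Ac by (simp add: x_def mult_mat_vec)
  moreover have "x \<noteq> 0\<^sub>v n" "x = map_vec Re y \<or> x = map_vec Im y"
    using ab0 by (auto simp: x_def a_def b_def)
  ultimately show thesis using that by blast
qed

lemma gen_eigsys_orth_complement_invariant:
  assumes K: "K \<in> carrier_mat n n" "transpose_mat K = K" and A: "A \<in> carrier_mat n n" "transpose_mat A = A"
    and T: "T \<in> carrier_mat n n" "A * T = K"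
    and es: "gen_eigsys n K A k v l" and j: "j < k" and x: "x \<in> carrier_vec n"
  shows "cV (A *\<^sub>v v j) \<bullet> (cM T *\<^sub>v x) = complex_of_real (l j) * (cV (A *\<^sub>v v j) \<bullet> x)"
proof -
  let ?f = "cV (A *\<^sub>v v j)"
  have vc: "v j \<in> carrier_vec n" using gen_eigsysD(1)[OF es j] .
  have fc: "?f \<in> carrier_vec n" using vc A by auto
  have cA: "cM A \<in> carrier_mat n n" "transpose_mat (cM A) = cM A"
    using A by (auto, metis map_mat_transpose)
  have cK: "cM K \<in> carrier_mat n n" "transpose_mat (cM K) = cM K"
    using K by (auto, metis map_mat_transpose)
  have cv: "cV (v j) \<in> carrier_vec n" using vc by auto
  have Tx: "cM T *\<^sub>v x \<in> carrier_vec n" using T x by auto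
  have fA: "?f = cM A *\<^sub>v cV (v j)" by (rule of_real_hom.mult_mat_vec_hom[OF A(1) vc])
  have "cM K *\<^sub>v cV (v j) = cV (l j \<cdot>\<^sub>v (A *\<^sub>v v j))"
    using gen_eigsysD(2)[OF es j] of_real_hom.mult_mat_vec_hom[OF K(1) vc] by metis
  also have "\<dots> = complex_of_real (l j) \<cdot>\<^sub>v ?f" by (intro eq_vecI) auto
  finally have cKv: "cM K *\<^sub>v cV (v j) = complex_of_real (l j) \<cdot>\<^sub>v ?f" .
  have "?f \<bullet> (cM T *\<^sub>v x) = cV (v j) \<bullet> (cM A *\<^sub>v (cM T *\<^sub>v x))"
    unfolding fA using scalar_prod_sym_mat_swap[OF cA Tx cv] cv Tx cA
    by (simp add: comm_scalar_prod[of _ n])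
  also have "cM A *\<^sub>v (cM T *\<^sub>v x) = cM K *\<^sub>v x"
    using T cA x of_real_hom.mat_hom_mult[OF A(1) T(1)] by (metis assoc_mult_mat_vec map_carrier_mat)
  also have "cV (v j) \<bullet> (cM K *\<^sub>v x) = complex_of_real (l j) * (x \<bullet> ?f)"
    using scalar_prod_sym_mat_swap[OF cK cv x] x fc unfolding cKv by simp
  finally show ?thesis using x fc by (simp add: comm_scalar_prod[of _ n])
qed

lemma gen_eigsys_extend_eigenvector:
  assumes K: "K \<in> carrier_mat n n" "transpose_mat K = K" and A: "sym_pd n A"
    and es: "gen_eigsys n K A k v l" and kn: "k < n"
  obtains x \<mu> where "x \<in> carrier_vec n" "x \<noteq> 0\<^sub>v n" "K *\<^sub>v x = \<mu> \<cdot>\<^sub>v (A *\<^sub>v x)"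
    "\<And>j. j < k \<Longrightarrow> (A *\<^sub>v v j) \<bullet> x = 0"
proof -
  have Ac: "A \<in> carrier_mat n n" "transpose_mat A = A" using A by (auto simp: sym_pd_def)
  obtain B where B: "B \<in> carrier_mat n n" "A * B = 1\<^sub>m n" using sym_pd_right_inverse[OF A] .
  define T where "T = B * K"
  have T: "T \<in> carrier_mat n n" "A * T = K"
    unfolding T_def using B K Ac by (auto simp flip: assoc_mult_mat[of A n n B n K n])
  have vc: "\<And>j. j < k \<Longrightarrow> v j \<in> carrier_vec n" using es by (auto simp: gen_eigsys_def)
  define f where "f j = cV (A *\<^sub>v v j)" for j
  have fc: "\<And>j. j < k \<Longrightarrow> f j \<in> carrier_vec n" unfolding f_def using vc Ac by auto
  \<comment> \<open>the \<open>A\<close>-orthogonal complement of the \<open>v j\<close> is invariant under \<open>T = A\<^sup>-\<^sup>1 K\<close>\<close>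
  define S where "S = {u \<in> carrier_vec n. \<forall>j<k. f j \<bullet> u = 0}"
  have S: "vec_subspace n S"
    unfolding vec_subspace_def S_def using fc by (auto simp: scalar_prod_add_distrib[of _ n])
  have ST: "cM T *\<^sub>v x \<in> S" if "x \<in> S" for x
    using that gen_eigsys_orth_complement_invariant[OF K Ac T es] T unfolding S_def f_def by auto
  obtain w where w: "w \<in> carrier_vec n" "w \<noteq> 0\<^sub>v n" "\<And>j. j < k \<Longrightarrow> (A *\<^sub>v v j) \<bullet> w = 0"
    using exists_nonzero_orthogonal_vec[of k n "\<lambda>j. A *\<^sub>v v j"] kn vc Ac by auto
  have "cV w \<in> S" unfolding S_def f_def using w(1,3) Ac vc by (auto simp: scalar_prod_of_real)
  moreover have "cV w \<noteq> 0\<^sub>v n" using w(1,2) by (metis of_real_hom.vec_hom_zero_iff)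
  ultimately obtain y z where y: "y \<in> S" "y \<noteq> 0\<^sub>v n" "cM T *\<^sub>v y = z \<cdot>\<^sub>v y"
    using invariant_subspace_eigenvector[OF _ S ST] T(1) by (metis map_carrier_mat)
  have yc: "y \<in> carrier_vec n" using y(1) by (auto simp: S_def)
  obtain x where x: "x = map_vec Re y \<or> x = map_vec Im y" "x \<noteq> 0\<^sub>v n" "K *\<^sub>v x = Re z \<cdot>\<^sub>v (A *\<^sub>v x)"
    using real_gen_eigenvector_of_complex[OF K A T yc y(2,3)] .
  have "(A *\<^sub>v v j) \<bullet> x = 0" if j: "j < k" for j
  proof -
    have Avc: "A *\<^sub>v v j \<in> carrier_vec n" using Ac vc[OF j] by auto
    have "f j \<bullet> y = 0" using y(1) j unfolding S_def by auto
    then show ?thesis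
      using x(1) Re_scalar_prod_of_real[OF Avc yc] Im_scalar_prod_of_real[OF Avc yc] by (auto simp: f_def)
  qed
  moreover have "x \<in> carrier_vec n" using x(1) yc by auto
  ultimately show thesis using that x(2,3) by blast
qed

lemma gen_eigsys_exists:
  assumes K: "K \<in> carrier_mat n n" "transpose_mat K = K" and A: "sym_pd n A"
  shows "k \<le> n \<Longrightarrow> \<exists>v l. gen_eigsys n K A k v l"
proof (induct k)
  case 0
  then show ?case by (auto simp: gen_eigsys_def)
next
  case (Suc k)
  then obtain v l where es: "gen_eigsys n K A k v l" by auto
  have Ac: "A \<in> carrier_mat n n" "transpose_mat A = A" using A by (auto simp: sym_pd_def)
  obtain x \<mu> where x: "x \<in> carrier_vec n" "x \<noteq> 0\<^sub>v n" "K *\<^sub>v x = \<mu> \<cdot>\<^sub>v (A *\<^sub>v x)"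
    "\<And>j. j < k \<Longrightarrow> (A *\<^sub>v v j) \<bullet> x = 0"
    using gen_eigsys_extend_eigenvector[OF K A es] Suc(2) by auto
  have pos: "0 < x \<bullet> (A *\<^sub>v x)" using A x(1,2) by (auto simp: sym_pd_def)
  define y where "y = (1 / sqrt (x \<bullet> (A *\<^sub>v x))) \<cdot>\<^sub>v x"
  have yc: "y \<in> carrier_vec n" unfolding y_def using x by auto
  have "y \<bullet> (A *\<^sub>v y) = 1"
    unfolding y_def using x(1) Ac pos by (simp add: mult_mat_vec power2_eq_square[symmetric])
  moreover have "K *\<^sub>v y = \<mu> \<cdot>\<^sub>v (A *\<^sub>v y)"
    unfolding y_def using x Ac K by (simp add: mult_mat_vec smult_smult_assoc mult.commute)
  moreover have "v j \<bullet> (A *\<^sub>v y) = 0" "y \<bullet> (A *\<^sub>v v j) = 0" if j: "j < k" for j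
  proof -
    have vc: "v j \<in> carrier_vec n" using gen_eigsysD(1)[OF es j] .
    have "y \<bullet> (A *\<^sub>v v j) = 0"
      using x(4)[OF j] x(1) vc Ac by (simp add: y_def comm_scalar_prod[of _ n])
    then show "y \<bullet> (A *\<^sub>v v j) = 0" "v j \<bullet> (A *\<^sub>v y) = 0"
      using scalar_prod_sym_mat_swap[OF Ac vc yc] by auto
  qed
  ultimately have "gen_eigsys n K A (Suc k) (v(k := y)) (l(k := \<mu>))"
    using es yc unfolding gen_eigsys_def by (auto simp: less_Suc_eq)
  then show ?case by blast
qed

lemma comm_ring_hom_poly_eval: "comm_ring_hom (\<lambda>p :: 'a :: comm_ring_1 poly. poly p t)"
  by unfold_locales auto

lemma poly_gen_char_poly:
  assumes "K \<in> carrier_mat n n" and "A \<in> carrier_mat n n"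
  shows "poly (gen_char_poly K A) t = det (t \<cdot>\<^sub>m A - K)"
proof -
  have "map_mat (\<lambda>p. poly p t) (map_mat (\<lambda>b. [:0, b:]) A + map_mat (\<lambda>a. [:- a:]) K) = t \<cdot>\<^sub>m A - K"
    using assms by (intro eq_matI) auto
  then show ?thesis
    unfolding gen_char_poly_def comm_ring_hom.hom_det[OF comm_ring_hom_poly_eval, symmetric] by simp
qed

lemma gen_eigsys_diagonalizes:
  assumes A: "A \<in> carrier_mat n n" and M: "M \<in> carrier_mat n n" and es: "gen_eigsys n K A n v l"
    and Mv: "\<And>j. j < n \<Longrightarrow> M *\<^sub>v v j = c j \<cdot>\<^sub>v (A *\<^sub>v v j)"
  shows "transpose_mat (mat_of_cols n (map v [0..<n])) * M * mat_of_cols n (map v [0..<n]) = mat_diag n c"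
proof (rule eq_matI)
  let ?V = "mat_of_cols n (map v [0..<n])"
  have V: "?V \<in> carrier_mat n n" using mat_of_cols_carrier[of n "map v [0..<n]"] by simp
  fix i j assume "i < dim_row (mat_diag n c)" "j < dim_col (mat_diag n c)"
  then have i: "i < n" and j: "j < n" by (auto simp: mat_diag_def)
  have col: "col ?V k = v k" if "k < n" for k using that gen_eigsysD(1)[OF es that] by simp
  have "(transpose_mat ?V * M * ?V) $$ (i,j) = v i \<bullet> (c j \<cdot>\<^sub>v (A *\<^sub>v v j))"
    using transpose_mult_mult_index[OF V M i j] col[OF i] col[OF j] Mv[OF j] by simp
  also have "\<dots> = c j * (if i = j then 1 else 0)"
    using gen_eigsys_orthonormal[OF es i j] gen_eigsysD(1)[OF es] i j A by simp
  finally show "(transpose_mat ?V * M * ?V) $$ (i,j) = mat_diag n c $$ (i,j)"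
    using i j by (simp add: mat_diag_def)
qed (use M in \<open>auto simp: mat_diag_def\<close>)

lemma det_mat_diag: "det (mat_diag n c) = (\<Prod>j\<leftarrow>[0..<n]. c j)"
proof -
  have "diag_mat (mat_diag n c) = map c [0..<n]"
    by (intro nth_equalityI) (auto simp: diag_mat_def mat_diag_def)
  then show ?thesis
    by (subst det_upper_triangular[of _ n]) (auto simp: upper_triangular_def mat_diag_def)
qed

lemma det_gen_eigsys_congruence:
  assumes A: "A \<in> carrier_mat n n" and M: "M \<in> carrier_mat n n" and es: "gen_eigsys n K A n v l"
    and Mv: "\<And>j. j < n \<Longrightarrow> M *\<^sub>v v j = c j \<cdot>\<^sub>v (A *\<^sub>v v j)"
  shows "det (mat_of_cols n (map v [0..<n])) ^ 2 * det M = (\<Prod>j\<leftarrow>[0..<n]. c j)"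
proof -
  let ?V = "mat_of_cols n (map v [0..<n])"
  have V: "?V \<in> carrier_mat n n" using mat_of_cols_carrier[of n "map v [0..<n]"] by simp
  have "det (mat_diag n c) = det (transpose_mat ?V * M * ?V)"
    by (simp only: gen_eigsys_diagonalizes[OF A M es Mv])
  also have "\<dots> = det ?V * det M * det ?V"
    using V M by (simp add: det_mult[of _ n] det_transpose)
  finally show ?thesis by (simp add: det_mat_diag power2_eq_square ac_simps)
qed

lemma det_pencil_gen_eigsys:
  assumes K: "K \<in> carrier_mat n n" and A: "A \<in> carrier_mat n n" and es: "gen_eigsys n K A n v l"
  shows "det (t \<cdot>\<^sub>m A - K) = det A * (\<Prod>j\<leftarrow>[0..<n]. t - l j)"
proof -
  let ?d = "det (mat_of_cols n (map v [0..<n])) ^ 2"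
  have vc: "\<And>j. j < n \<Longrightarrow> v j \<in> carrier_vec n" using gen_eigsysD(1)[OF es] .
  have "?d * det A = (\<Prod>j\<leftarrow>[0..<n]. 1)"
    using A vc by (intro det_gen_eigsys_congruence[OF A A es]) auto
  then have d_A: "?d * det A = 1" by (simp add: map_replicate_const prod_list_replicate)
  have d_pencil: "?d * det (t \<cdot>\<^sub>m A - K) = (\<Prod>j\<leftarrow>[0..<n]. t - l j)"
  proof (rule det_gen_eigsys_congruence[OF A _ es])
    fix j assume j: "j < n"
    have "(t \<cdot>\<^sub>m A - K) *\<^sub>v v j = (t \<cdot>\<^sub>m A) *\<^sub>v v j - K *\<^sub>v v j"
      using A K vc[OF j] by (intro minus_mult_distrib_mat_vec) auto
    also have "\<dots> = t \<cdot>\<^sub>v (A *\<^sub>v v j) - l j \<cdot>\<^sub>v (A *\<^sub>v v j)"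
      using smult_mat_mult_mat_vec[OF A vc[OF j]] gen_eigsysD(2)[OF es j] by simp
    also have "\<dots> = (t - l j) \<cdot>\<^sub>v (A *\<^sub>v v j)"
      using A vc[OF j] by (intro eq_vecI) (auto simp: left_diff_distrib)
    finally show "(t \<cdot>\<^sub>m A - K) *\<^sub>v v j = (t - l j) \<cdot>\<^sub>v (A *\<^sub>v v j)" .
  qed (use A K in auto)
  have "det (t \<cdot>\<^sub>m A - K) = det A * (?d * det (t \<cdot>\<^sub>m A - K))"
    using d_A by (simp add: algebra_simps)
  then show ?thesis unfolding d_pencil .
qed

lemma gen_char_poly_gen_eigsys:
  assumes K: "K \<in> carrier_mat n n" and A: "A \<in> carrier_mat n n" and es: "gen_eigsys n K A n v l"
  shows "gen_char_poly K A = Polynomial.smult (det A) (\<Prod>j\<leftarrow>[0..<n]. [:- l j, 1:])"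
  unfolding poly_eq_poly_eq_iff[symmetric]
  by (rule ext) (simp add: poly_gen_char_poly[OF K A] det_pencil_gen_eigsys[OF K A es]
      poly_prod_list o_def)

lemma proots_prod_list_linear: "proots (\<Prod>j\<leftarrow>js. [:- l j, 1:]) = mset (map l js)"
proof (induct js)
  case (Cons j js)
  have "(\<Prod>j\<leftarrow>js. [:- l j, 1:]) \<noteq> 0" unfolding prod_list_zero_iff by auto
  then have "proots (\<Prod>j\<leftarrow>j # js. [:- l j, 1:]) = proots [:- l j, 1:] + proots (\<Prod>j\<leftarrow>js. [:- l j, 1:])"
    by (simp only: list.map prod_list.Cons, intro proots_mult) simp_all
  then show ?case using Cons by (simp add: proots_linear_factor)
qed simp

lemma gen_eig_gen_eigsys:
  assumes K: "K \<in> carrier_mat n n" and A: "sym_pd n A" and es: "gen_eigsys n K A n v l"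
  shows "gen_eig K A i = sort (map l [0..<n]) ! (i - 1)"
proof -
  have Ac: "A \<in> carrier_mat n n" using A by (auto simp: sym_pd_def)
  have "proots (gen_char_poly K A) = mset (map l [0..<n])"
    unfolding gen_char_poly_gen_eigsys[OF K Ac es] proots_smult[OF sym_pd_det_nonzero[OF A]]
      proots_prod_list_linear ..
  then show ?thesis unfolding gen_eig_def by (simp only: sorted_list_of_multiset_mset)
qed

definition lincomb_vecs :: "nat \<Rightarrow> 'i set \<Rightarrow> ('i \<Rightarrow> real) \<Rightarrow> ('i \<Rightarrow> real vec) \<Rightarrow> real vec" where
  "lincomb_vecs n I \<alpha> u = vec n (\<lambda>r. \<Sum>k\<in>I. \<alpha> k * u k $ r)"

lemma lincomb_vecs_carrier [simp]: "lincomb_vecs n I \<alpha> u \<in> carrier_vec n"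
  unfolding lincomb_vecs_def by auto

lemma scalar_prod_lincomb_vecs:
  assumes z: "z \<in> carrier_vec n" and u: "\<And>k. k \<in> I \<Longrightarrow> u k \<in> carrier_vec n"
  shows "z \<bullet> lincomb_vecs n I \<alpha> u = (\<Sum>k\<in>I. \<alpha> k * (z \<bullet> u k))"
proof -
  have "z \<bullet> lincomb_vecs n I \<alpha> u = (\<Sum>r<n. \<Sum>k\<in>I. z $ r * (\<alpha> k * u k $ r))"
    using z by (simp add: lincomb_vecs_def scalar_prod_def lessThan_atLeast0 sum_distrib_left)
  also have "\<dots> = (\<Sum>k\<in>I. \<alpha> k * (\<Sum>r<n. z $ r * u k $ r))"
    by (subst sum.swap) (simp add: sum_distrib_left ac_simps)
  also have "\<dots> = (\<Sum>k\<in>I. \<alpha> k * (z \<bullet> u k))"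
  proof (intro sum.cong refl)
    fix k assume "k \<in> I"
    then have "dim_vec (u k) = n" using u by auto
    then show "\<alpha> k * (\<Sum>r<n. z $ r * u k $ r) = \<alpha> k * (z \<bullet> u k)"
      by (simp add: scalar_prod_def lessThan_atLeast0)
  qed
  finally show ?thesis .
qed

lemma mult_mat_vec_lincomb_vecs:
  assumes M: "M \<in> carrier_mat n n" and u: "\<And>k. k \<in> I \<Longrightarrow> u k \<in> carrier_vec n"
  shows "M *\<^sub>v lincomb_vecs n I \<alpha> u = lincomb_vecs n I \<alpha> (\<lambda>k. M *\<^sub>v u k)"
proof (rule eq_vecI)
  fix r assume "r < dim_vec (lincomb_vecs n I \<alpha> (\<lambda>k. M *\<^sub>v u k))"
  then have r: "r < n" by (simp add: lincomb_vecs_def)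
  have "row M r \<in> carrier_vec n" using M r by auto
  then have "row M r \<bullet> lincomb_vecs n I \<alpha> u = (\<Sum>k\<in>I. \<alpha> k * (row M r \<bullet> u k))"
    by (rule scalar_prod_lincomb_vecs[OF _ u])
  then show "(M *\<^sub>v lincomb_vecs n I \<alpha> u) $ r = lincomb_vecs n I \<alpha> (\<lambda>k. M *\<^sub>v u k) $ r"
    using M r by (simp add: lincomb_vecs_def)
qed (use M in \<open>simp add: lincomb_vecs_def\<close>)

lemma scalar_prod_mult_mat_vec_lincomb_vecs:
  assumes M: "M \<in> carrier_mat n n" and z: "z \<in> carrier_vec n"
    and u: "\<And>k. k \<in> I \<Longrightarrow> u k \<in> carrier_vec n"
  shows "z \<bullet> (M *\<^sub>v lincomb_vecs n I \<alpha> u) = (\<Sum>k\<in>I. \<alpha> k * (z \<bullet> (M *\<^sub>v u k)))"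
proof -
  have "M *\<^sub>v lincomb_vecs n I \<alpha> u = lincomb_vecs n I \<alpha> (\<lambda>k. M *\<^sub>v u k)"
    by (rule mult_mat_vec_lincomb_vecs[OF M u])
  then show ?thesis using M u scalar_prod_lincomb_vecs[OF z, of I "\<lambda>k. M *\<^sub>v u k" \<alpha>] by auto
qed

lemma lincomb_vecs_dependent:
  assumes I: "finite I" "n < card I" and u: "\<And>k. k \<in> I \<Longrightarrow> u k \<in> carrier_vec n"
  obtains \<alpha> k0 where "k0 \<in> I" "\<alpha> k0 \<noteq> 0" "lincomb_vecs n I \<alpha> u = 0\<^sub>v n"
proof -
  obtain h where h: "bij_betw h {0..<card I} I" using ex_bij_betw_nat_finite[OF I(1)] by blast
  define C where "C = mat n (card I) (\<lambda>(r,k). u (h k) $ r)"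
  obtain c where c: "c \<in> carrier_vec (card I)" "c \<noteq> 0\<^sub>v (card I)" "C *\<^sub>v c = 0\<^sub>v n"
    using wide_mat_kernel_nonzero[of C n "card I"] I(2) unfolding C_def by auto
  obtain i where i: "i < card I" "c $ i \<noteq> 0" using nonzero_vec_nonzero_entry[OF c(1,2)] .
  define \<alpha> where "\<alpha> = (\<lambda>k. c $ inv_into {0..<card I} h k)"
  have "lincomb_vecs n I \<alpha> u = 0\<^sub>v n"
  proof (rule eq_vecI)
    fix r assume "r < dim_vec (0\<^sub>v n :: real vec)"
    then have r: "r < n" by simp
    have "(\<Sum>k\<in>I. \<alpha> k * u k $ r) = (\<Sum>k\<in>{0..<card I}. \<alpha> (h k) * u (h k) $ r)"
      using sum.reindex_bij_betw[OF h, of "\<lambda>k. \<alpha> k * u k $ r"] by simp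
    also have "\<dots> = (\<Sum>k\<in>{0..<card I}. u (h k) $ r * c $ k)"
      using h by (intro sum.cong) (auto simp: \<alpha>_def bij_betw_inv_into_left)
    also have "\<dots> = (C *\<^sub>v c) $ r"
      using r c(1) by (simp add: C_def scalar_prod_def mult.commute)
    finally show "lincomb_vecs n I \<alpha> u $ r = 0\<^sub>v n $ r" using r c(3) by (simp add: lincomb_vecs_def)
  qed simp
  moreover have "h i \<in> I" "\<alpha> (h i) \<noteq> 0"
    using h i by (auto simp: \<alpha>_def bij_betw_inv_into_left bij_betw_apply)
  ultimately show thesis using that by blast
qed

context
  fixes n :: nat and K A :: "real mat" and v :: "nat \<Rightarrow> real vec" and l :: "nat \<Rightarrow> real"
  assumes K: "K \<in> carrier_mat n n" and A: "A \<in> carrier_mat n n" "transpose_mat A = A"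
    and es: "gen_eigsys n K A n v l"
begin

lemma gen_eigsys_coords:
  assumes I: "I \<subseteq> {..<n}" and j: "j \<in> I"
  shows "v j \<bullet> (A *\<^sub>v lincomb_vecs n I \<alpha> v) = \<alpha> j"
    and "v j \<bullet> (K *\<^sub>v lincomb_vecs n I \<alpha> v) = l j * \<alpha> j"
proof -
  have fin: "finite I" using I finite_subset by blast
  have vc: "\<And>k. k \<in> I \<Longrightarrow> v k \<in> carrier_vec n" using gen_eigsysD(1)[OF es] I by auto
  have vj: "v j \<in> carrier_vec n" using vc j .
  have orth: "v j \<bullet> (A *\<^sub>v v k) = (if k = j then 1 else 0)" if "k \<in> I" for k
    using gen_eigsys_orthonormal[OF es, of j k] I j that by (auto simp: subset_eq)
  have "v j \<bullet> (A *\<^sub>v lincomb_vecs n I \<alpha> v) = (\<Sum>k\<in>I. \<alpha> k * (v j \<bullet> (A *\<^sub>v v k)))"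
    by (rule scalar_prod_mult_mat_vec_lincomb_vecs[OF A(1) vj vc])
  also have "\<dots> = (\<Sum>k\<in>I. if k = j then \<alpha> k else 0)" using orth by (intro sum.cong) auto
  also have "\<dots> = \<alpha> j" using fin j by simp
  finally show "v j \<bullet> (A *\<^sub>v lincomb_vecs n I \<alpha> v) = \<alpha> j" .
  have Kv: "K *\<^sub>v v k = l k \<cdot>\<^sub>v (A *\<^sub>v v k)" if "k \<in> I" for k
    using gen_eigsysD(2)[OF es] I that by auto
  have "v j \<bullet> (K *\<^sub>v lincomb_vecs n I \<alpha> v) = (\<Sum>k\<in>I. \<alpha> k * (v j \<bullet> (K *\<^sub>v v k)))"
    by (rule scalar_prod_mult_mat_vec_lincomb_vecs[OF K vj vc])
  also have "\<dots> = (\<Sum>k\<in>I. \<alpha> k * l k * (v j \<bullet> (A *\<^sub>v v k)))"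
    using Kv vj vc A by (intro sum.cong refl) auto
  also have "\<dots> = (\<Sum>k\<in>I. if k = j then l k * \<alpha> k else 0)" using orth by (intro sum.cong) auto
  also have "\<dots> = l j * \<alpha> j" using fin j by simp
  finally show "v j \<bullet> (K *\<^sub>v lincomb_vecs n I \<alpha> v) = l j * \<alpha> j" .
qed

lemma gen_eigsys_quad_forms:
  assumes I: "I \<subseteq> {..<n}"
  shows "lincomb_vecs n I \<alpha> v \<bullet> (A *\<^sub>v lincomb_vecs n I \<alpha> v) = (\<Sum>k\<in>I. \<alpha> k ^ 2)"
    and "lincomb_vecs n I \<alpha> v \<bullet> (K *\<^sub>v lincomb_vecs n I \<alpha> v) = (\<Sum>k\<in>I. l k * \<alpha> k ^ 2)"
proof -
  let ?x = "lincomb_vecs n I \<alpha> v"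
  have vc: "\<And>k. k \<in> I \<Longrightarrow> v k \<in> carrier_vec n" using gen_eigsysD(1)[OF es] I by auto
  have swap: "?x \<bullet> (M *\<^sub>v ?x) = (\<Sum>k\<in>I. \<alpha> k * (v k \<bullet> (M *\<^sub>v ?x)))"
    if M: "M \<in> carrier_mat n n" for M
    using M vc by (subst comm_scalar_prod[of _ n]) (auto simp: scalar_prod_lincomb_vecs
        comm_scalar_prod[of "M *\<^sub>v ?x" n] intro!: sum.cong)
  show "?x \<bullet> (A *\<^sub>v ?x) = (\<Sum>k\<in>I. \<alpha> k ^ 2)"
    unfolding swap[OF A(1)] using gen_eigsys_coords(1)[OF I] by (simp add: power2_eq_square)
  show "?x \<bullet> (K *\<^sub>v ?x) = (\<Sum>k\<in>I. l k * \<alpha> k ^ 2)"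
    unfolding swap[OF K] using gen_eigsys_coords(2)[OF I] by (simp add: power2_eq_square ac_simps)
qed

lemma gen_eigsys_expansion:
  assumes u: "u \<in> carrier_vec n"
  shows "u = lincomb_vecs n {..<n} (\<lambda>k. v k \<bullet> (A *\<^sub>v u)) v"
proof -
  let ?V = "mat_of_cols n (map v [0..<n])"
  have V: "?V \<in> carrier_mat n n" using mat_of_cols_carrier[of n "map v [0..<n]"] by simp
  have vc: "\<And>j. j < n \<Longrightarrow> v j \<in> carrier_vec n" using gen_eigsysD(1)[OF es] .
  have "transpose_mat ?V * A * ?V = mat_diag n (\<lambda>_. 1)"
    using vc A by (intro gen_eigsys_diagonalizes[OF A(1) A(1) es]) auto
  also have "mat_diag n (\<lambda>_. 1) = (1\<^sub>m n :: real mat)" by (intro eq_matI) (auto simp: mat_diag_def)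
  finally have VAV: "(transpose_mat ?V * A) * ?V = 1\<^sub>m n" .
  have inv: "?V * (transpose_mat ?V * A) = 1\<^sub>m n"
    by (rule mat_mult_left_right_inverse[OF _ V VAV]) (use V A in auto)
  have coord: "(transpose_mat ?V *\<^sub>v (A *\<^sub>v u)) $ k = v k \<bullet> (A *\<^sub>v u)" if "k < n" for k
    using that V vc[OF that] by simp
  have assoc: "(transpose_mat ?V * A) *\<^sub>v u = transpose_mat ?V *\<^sub>v (A *\<^sub>v u)"
    using V A u by (intro assoc_mult_mat_vec[of _ n n _ n]) auto
  have "u = (?V * (transpose_mat ?V * A)) *\<^sub>v u" using inv u by simp
  also have "\<dots> = ?V *\<^sub>v (transpose_mat ?V *\<^sub>v (A *\<^sub>v u))"
    unfolding assoc[symmetric] using V A u by (intro assoc_mult_mat_vec[of _ n n _ n]) auto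
  also have "\<dots> = lincomb_vecs n {..<n} (\<lambda>k. v k \<bullet> (A *\<^sub>v u)) v"
  proof (rule eq_vecI)
    fix r assume "r < dim_vec (lincomb_vecs n {..<n} (\<lambda>k. v k \<bullet> (A *\<^sub>v u)) v)"
    then have r: "r < n" by (simp add: lincomb_vecs_def)
    then show "(?V *\<^sub>v (transpose_mat ?V *\<^sub>v (A *\<^sub>v u))) $ r
      = lincomb_vecs n {..<n} (\<lambda>k. v k \<bullet> (A *\<^sub>v u)) v $ r"
      using V A u coord by (auto simp: lincomb_vecs_def scalar_prod_def mat_of_cols_index
          lessThan_atLeast0 ac_simps intro!: sum.cong)
  qed (use V A in \<open>simp add: lincomb_vecs_def\<close>)
  finally show ?thesis .
qed

end

subsection \<open>Comparison of generalized eigenvalues\<close>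

lemma card_sort_index_filter:
  "card {j. j < length xs \<and> P (sort xs ! j)} = card {j. j < length xs \<and> P (xs ! j)}"
  using length_filter_conv_card[of P "sort xs"] length_filter_conv_card[of P xs]
  by (simp add: filter_sort)

lemma card_le_sorted_nth:
  fixes xs :: "'a :: linorder list"
  assumes "1 \<le> i" "i \<le> length xs"
  shows "i \<le> card {j. j < length xs \<and> xs ! j \<le> sort xs ! (i - 1)}"
proof -
  have "{0..<i} \<subseteq> {j. j < length (sort xs) \<and> sort xs ! j \<le> sort xs ! (i - 1)}"
    using assms by (auto intro!: sorted_nth_mono)
  from card_mono[OF _ this] show ?thesis
    using card_sort_index_filter[of xs "\<lambda>x. x \<le> sort xs ! (i - 1)"] by simp
qed

lemma card_ge_sorted_nth:
  fixes xs :: "'a :: linorder list"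
  assumes "1 \<le> i" "i \<le> length xs"
  shows "length xs + 1 - i \<le> card {j. j < length xs \<and> sort xs ! (i - 1) \<le> xs ! j}"
proof -
  have "{i - 1..<length xs} \<subseteq> {j. j < length (sort xs) \<and> sort xs ! (i - 1) \<le> sort xs ! j}"
    using assms by (auto intro!: sorted_nth_mono)
  from card_mono[OF _ this] show ?thesis
    using assms card_sort_index_filter[of xs "\<lambda>x. sort xs ! (i - 1) \<le> x"] by simp
qed

lemma gen_eigsys_quad_form_le:
  assumes K: "K \<in> carrier_mat n n" and A: "A \<in> carrier_mat n n" "transpose_mat A = A"
    and es: "gen_eigsys n K A n v l" and I: "I \<subseteq> {..<n}" and l: "\<And>k. k \<in> I \<Longrightarrow> l k \<le> \<mu>"
  shows "lincomb_vecs n I \<alpha> v \<bullet> (K *\<^sub>v lincomb_vecs n I \<alpha> v)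
    \<le> \<mu> * (lincomb_vecs n I \<alpha> v \<bullet> (A *\<^sub>v lincomb_vecs n I \<alpha> v))"
  unfolding gen_eigsys_quad_forms[OF K A es I] sum_distrib_left
  using l by (intro sum_mono mult_right_mono) auto

lemma gen_eigsys_quad_form_ge:
  assumes K: "K \<in> carrier_mat n n" and A: "A \<in> carrier_mat n n" "transpose_mat A = A"
    and es: "gen_eigsys n K A n v l" and I: "I \<subseteq> {..<n}" and l: "\<And>k. k \<in> I \<Longrightarrow> \<nu> \<le> l k"
  shows "\<nu> * (lincomb_vecs n I \<alpha> v \<bullet> (A *\<^sub>v lincomb_vecs n I \<alpha> v))
    \<le> lincomb_vecs n I \<alpha> v \<bullet> (K *\<^sub>v lincomb_vecs n I \<alpha> v)"
  unfolding gen_eigsys_quad_forms[OF K A es I] sum_distrib_left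
  using l by (intro sum_mono mult_right_mono) auto

lemma gen_eigsys_spans_intersect:
  assumes K: "K \<in> carrier_mat n n"
    and A: "A \<in> carrier_mat n n" "transpose_mat A = A" and esA: "gen_eigsys n K A n vA lA"
    and B: "B \<in> carrier_mat n n" "transpose_mat B = B" and esB: "gen_eigsys n K B n vB lB"
    and TA: "TA \<subseteq> {..<n}" and TB: "TB \<subseteq> {..<n}" and card: "n < card TA + card TB"
  obtains \<alpha> \<beta> where "lincomb_vecs n TA \<alpha> vA = lincomb_vecs n TB \<beta> vB"
    "lincomb_vecs n TA \<alpha> vA \<noteq> 0\<^sub>v n"
proof -
  have fin: "finite TA" "finite TB" using TA TB finite_subset by blast+
  define u where "u = case_sum vA vB"
  have uc: "\<And>k. k \<in> TA <+> TB \<Longrightarrow> u k \<in> carrier_vec n"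
    using TA TB gen_eigsysD(1)[OF esA] gen_eigsysD(1)[OF esB] by (auto simp: u_def)
  have finP: "finite (TA <+> TB)" using fin by simp
  have cardP: "n < card (TA <+> TB)" using fin card by (simp add: card_Plus)
  obtain \<gamma> k0 where k0: "k0 \<in> TA <+> TB" "\<gamma> k0 \<noteq> 0"
    and dep: "lincomb_vecs n (TA <+> TB) \<gamma> u = 0\<^sub>v n"
    by (rule lincomb_vecs_dependent[OF finP cardP uc])
  define x where "x = lincomb_vecs n TA (\<gamma> \<circ> Inl) vA"
  define y where "y = lincomb_vecs n TB (\<lambda>k. - \<gamma> (Inr k)) vB"
  have "x = y"
  proof (rule eq_vecI)
    fix r assume "r < dim_vec y"
    then have r: "r < n" by (simp add: y_def lincomb_vecs_def)
    have "0 = lincomb_vecs n (TA <+> TB) \<gamma> u $ r" using dep r by simp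
    also have "\<dots> = x $ r - y $ r"
      using r fin by (simp add: lincomb_vecs_def x_def y_def u_def sum.Plus sum_negf)
    finally show "x $ r = y $ r" by simp
  qed (simp add: x_def y_def lincomb_vecs_def)
  moreover have "x \<noteq> 0\<^sub>v n"
  proof
    assume x0: "x = 0\<^sub>v n"
    have "\<gamma> (Inl k) = 0" if "k \<in> TA" for k
      using gen_eigsys_coords(1)[OF K A esA TA that, of "\<gamma> \<circ> Inl"] x0 A(1)
        gen_eigsysD(1)[OF esA, of k] TA that by (auto simp: x_def)
    moreover have "\<gamma> (Inr k) = 0" if "k \<in> TB" for k
      using gen_eigsys_coords(1)[OF K B esB TB that, of "\<lambda>k. - \<gamma> (Inr k)"] x0 \<open>x = y\<close> B(1)
        gen_eigsysD(1)[OF esB, of k] TB that by (auto simp: y_def)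
    ultimately show False using k0 by auto
  qed
  ultimately show thesis using that unfolding x_def y_def by blast
qed

text \<open>Courant--Fischer: a nonzero vector spanned both by the eigenvectors of the \<open>i\<close> smallest eigenvalues
  of \<open>(K, A)\<close> and by those of the \<open>n + 1 - i\<close> largest of \<open>(K, B)\<close> compares the two \<open>i\<close>-th
  eigenvalues.\<close>

lemma gen_eigsys_sorted_compare:
  assumes K: "K \<in> carrier_mat n n"
    and A: "sym_pd n A" and esA: "gen_eigsys n K A n vA lA" and lA: "\<And>j. j < n \<Longrightarrow> 0 \<le> lA j"
    and B: "sym_pd n B" and esB: "gen_eigsys n K B n vB lB"
    and AB: "\<And>x. x \<in> carrier_vec n \<Longrightarrow> x \<bullet> (A *\<^sub>v x) \<le> \<gamma> * (x \<bullet> (B *\<^sub>v x))"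
    and i: "1 \<le> i" "i \<le> n"
  shows "sort (map lB [0..<n]) ! (i - 1) \<le> \<gamma> * sort (map lA [0..<n]) ! (i - 1)"
proof -
  have Ac: "A \<in> carrier_mat n n" "transpose_mat A = A" using A by (auto simp: sym_pd_def)
  have Bc: "B \<in> carrier_mat n n" "transpose_mat B = B" using B by (auto simp: sym_pd_def)
  define \<mu> where "\<mu> = sort (map lA [0..<n]) ! (i - 1)"
  define \<nu> where "\<nu> = sort (map lB [0..<n]) ! (i - 1)"
  have "i - 1 < length (sort (map lA [0..<n]))" using i by simp
  then have "\<mu> \<in> set (map lA [0..<n])" unfolding \<mu>_def by (metis nth_mem set_sort)
  then have \<mu>0: "0 \<le> \<mu>" using lA by auto
  have "i \<le> card {j. j < n \<and> map lA [0..<n] ! j \<le> \<mu>}"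
    using card_le_sorted_nth[of i "map lA [0..<n]"] i unfolding \<mu>_def by simp
  also have "{j. j < n \<and> map lA [0..<n] ! j \<le> \<mu>} = {j. j < n \<and> lA j \<le> \<mu>}" by auto
  finally have "i \<le> card {j. j < n \<and> lA j \<le> \<mu>}" .
  then obtain TA where TA: "TA \<subseteq> {j. j < n \<and> lA j \<le> \<mu>}" "card TA = i"
    by (meson obtain_subset_with_card_n)
  have "n + 1 - i \<le> card {j. j < n \<and> \<nu> \<le> map lB [0..<n] ! j}"
    using card_ge_sorted_nth[of i "map lB [0..<n]"] i unfolding \<nu>_def by simp
  also have "{j. j < n \<and> \<nu> \<le> map lB [0..<n] ! j} = {j. j < n \<and> \<nu> \<le> lB j}" by auto
  finally have "n + 1 - i \<le> card {j. j < n \<and> \<nu> \<le> lB j}" .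
  then obtain TB where TB: "TB \<subseteq> {j. j < n \<and> \<nu> \<le> lB j}" "card TB = n + 1 - i"
    by (meson obtain_subset_with_card_n)
  have TAn: "TA \<subseteq> {..<n}" and TBn: "TB \<subseteq> {..<n}" using TA(1) TB(1) by auto
  obtain \<alpha> \<beta> where xy: "lincomb_vecs n TA \<alpha> vA = lincomb_vecs n TB \<beta> vB"
    and x0: "lincomb_vecs n TA \<alpha> vA \<noteq> 0\<^sub>v n"
    using gen_eigsys_spans_intersect[OF K Ac esA Bc esB TAn TBn] TA(2) TB(2) i by auto
  define x where "x = lincomb_vecs n TA \<alpha> vA"
  have x: "x \<in> carrier_vec n" "x \<noteq> 0\<^sub>v n" using x0 by (auto simp: x_def)
  have "\<nu> * (x \<bullet> (B *\<^sub>v x)) \<le> x \<bullet> (K *\<^sub>v x)"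
    unfolding x_def xy using TB(1) by (intro gen_eigsys_quad_form_ge[OF K Bc esB TBn]) auto
  also have "\<dots> \<le> \<mu> * (x \<bullet> (A *\<^sub>v x))"
    unfolding x_def using TA(1) by (intro gen_eigsys_quad_form_le[OF K Ac esA TAn]) auto
  also have "\<dots> \<le> (\<gamma> * \<mu>) * (x \<bullet> (B *\<^sub>v x))"
    using mult_left_mono[OF AB[OF x(1)] \<mu>0] by (simp add: ac_simps)
  finally have "\<nu> * (x \<bullet> (B *\<^sub>v x)) \<le> (\<gamma> * \<mu>) * (x \<bullet> (B *\<^sub>v x))" .
  moreover have "0 < x \<bullet> (B *\<^sub>v x)" using B x by (auto simp: sym_pd_def)
  ultimately show ?thesis unfolding \<mu>_def \<nu>_def by simp
qed

lemma gen_eigsys_eigenvalue: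
  assumes A: "A \<in> carrier_mat n n" and es: "gen_eigsys n K A k v l" and j: "j < k"
  shows "v j \<bullet> (K *\<^sub>v v j) = l j" and "v j \<noteq> 0\<^sub>v n"
proof -
  note vj = gen_eigsysD[OF es j]
  show "v j \<bullet> (K *\<^sub>v v j) = l j" unfolding vj(2) using vj(1,3) A by simp
  show "v j \<noteq> 0\<^sub>v n" using vj(3) A by auto
qed

lemma gen_eigsys_eigenvalue_pos:
  assumes K: "sym_pd n K" and A: "A \<in> carrier_mat n n" and es: "gen_eigsys n K A k v l" and j: "j < k"
  shows "0 < l j"
  using gen_eigsys_eigenvalue[OF A es j] gen_eigsysD(1)[OF es j] K by (auto simp: sym_pd_def)

lemma gen_eigsys_quad_form_bounds:
  assumes K: "K \<in> carrier_mat n n" and A: "A \<in> carrier_mat n n" "transpose_mat A = A"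
    and es: "gen_eigsys n K A n v l" and x: "x \<in> carrier_vec n" and n: "0 < n"
  shows "Min (l ` {..<n}) * (x \<bullet> (A *\<^sub>v x)) \<le> x \<bullet> (K *\<^sub>v x)"
    and "x \<bullet> (K *\<^sub>v x) \<le> Max (l ` {..<n}) * (x \<bullet> (A *\<^sub>v x))"
proof -
  define \<alpha> where "\<alpha> k = v k \<bullet> (A *\<^sub>v x)" for k
  have x_eq: "lincomb_vecs n {..<n} \<alpha> v = x"
    unfolding \<alpha>_def by (rule gen_eigsys_expansion[OF K A es x, symmetric])
  have "Min (l ` {..<n}) * (lincomb_vecs n {..<n} \<alpha> v \<bullet> (A *\<^sub>v lincomb_vecs n {..<n} \<alpha> v))
    \<le> lincomb_vecs n {..<n} \<alpha> v \<bullet> (K *\<^sub>v lincomb_vecs n {..<n} \<alpha> v)"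
    by (rule gen_eigsys_quad_form_ge[OF K A es]) auto
  then show "Min (l ` {..<n}) * (x \<bullet> (A *\<^sub>v x)) \<le> x \<bullet> (K *\<^sub>v x)" unfolding x_eq .
  have "lincomb_vecs n {..<n} \<alpha> v \<bullet> (K *\<^sub>v lincomb_vecs n {..<n} \<alpha> v)
    \<le> Max (l ` {..<n}) * (lincomb_vecs n {..<n} \<alpha> v \<bullet> (A *\<^sub>v lincomb_vecs n {..<n} \<alpha> v))"
    by (rule gen_eigsys_quad_form_le[OF K A es]) auto
  then show "x \<bullet> (K *\<^sub>v x) \<le> Max (l ` {..<n}) * (x \<bullet> (A *\<^sub>v x))" unfolding x_eq .
qed

lemma spectrum_gen_eigsys_one:
  assumes M: "M \<in> carrier_mat n n" "transpose_mat M = M" and es: "gen_eigsys n M (1\<^sub>m n) n v l"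
  shows "spectrum M = l ` {..<n}"
proof
  have I: "1\<^sub>m n \<in> carrier_mat n n" "transpose_mat (1\<^sub>m n :: real mat) = 1\<^sub>m n" by auto
  have vc: "\<And>j. j < n \<Longrightarrow> v j \<in> carrier_vec n" using gen_eigsysD(1)[OF es] .
  show "l ` {..<n} \<subseteq> spectrum M"
  proof
    fix c assume "c \<in> l ` {..<n}"
    then obtain j where j: "j < n" "c = l j" by auto
    have "eigenvector M (v j) (l j)"
      unfolding eigenvector_def using M vc[OF j(1)] gen_eigsys_eigenvalue(2)[OF I(1) es j(1)]
        gen_eigsysD(2)[OF es j(1)] by simp
    then show "c \<in> spectrum M" unfolding spectrum_def eigenvalue_def j by auto
  qed
  show "spectrum M \<subseteq> l ` {..<n}"
  proof
    fix c assume "c \<in> spectrum M"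
    then obtain u where u: "u \<in> carrier_vec n" "u \<noteq> 0\<^sub>v n" "M *\<^sub>v u = c \<cdot>\<^sub>v u"
      unfolding spectrum_def eigenvalue_def eigenvector_def using M by auto
    obtain j where j: "j < n" "v j \<bullet> u \<noteq> 0"
    proof (rule ccontr)
      assume "\<not> thesis"
      then have "\<And>j. j < n \<Longrightarrow> v j \<bullet> (1\<^sub>m n *\<^sub>v u) = 0" using that u(1) by auto
      then have "u = 0\<^sub>v n"
        using gen_eigsys_expansion[OF M(1) I es u(1)] by (simp add: lincomb_vecs_def zero_vec_def)
      with u(2) show False by simp
    qed
    \<comment> \<open>\<open>v\<^sub>j \<bullet> M u\<close> equals both \<open>c (v\<^sub>j \<bullet> u)\<close> and, by symmetry, \<open>l\<^sub>j (v\<^sub>j \<bullet> u)\<close>\<close>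
    have "c * (v j \<bullet> u) = v j \<bullet> (M *\<^sub>v u)" using u(1,3) vc[OF j(1)] by simp
    also have "\<dots> = u \<bullet> (M *\<^sub>v v j)" by (rule scalar_prod_sym_mat_swap[OF M vc[OF j(1)] u(1)])
    also have "\<dots> = l j * (v j \<bullet> u)"
      using gen_eigsysD(2)[OF es j(1)] u(1) vc[OF j(1)] by (simp add: comm_scalar_prod[of _ n])
    finally have "c = l j" using j(2) by simp
    then show "c \<in> l ` {..<n}" using j(1) by auto
  qed
qed

lemma gen_eig_pos:
  assumes K: "sym_pd n K" and A: "sym_pd n A" and i: "1 \<le> i" "i \<le> n"
  shows "0 < gen_eig K A i"
proof -
  have Kc: "K \<in> carrier_mat n n" "transpose_mat K = K" using K by (auto simp: sym_pd_def)
  have Ac: "A \<in> carrier_mat n n" using A by (auto simp: sym_pd_def)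
  obtain v l where es: "gen_eigsys n K A n v l" using gen_eigsys_exists[OF Kc A] by blast
  have "i - 1 < length (sort (map l [0..<n]))" using i by simp
  then have "gen_eig K A i \<in> set (map l [0..<n])"
    unfolding gen_eig_gen_eigsys[OF Kc(1) A es] by (metis nth_mem set_sort)
  then show ?thesis using gen_eigsys_eigenvalue_pos[OF K Ac es] by auto
qed

lemma gen_eig_le_of_quad_form_le:
  assumes K: "sym_pd n K" and A: "sym_pd n A" and B: "sym_pd n B" and \<gamma>: "0 \<le> \<gamma>"
    and AB: "\<And>x. x \<in> carrier_vec n \<Longrightarrow> x \<bullet> (A *\<^sub>v x) \<le> \<gamma> * (x \<bullet> (B *\<^sub>v x))"
    and i: "1 \<le> i" "i \<le> n"
  shows "gen_eig K B i \<le> \<gamma> * gen_eig K A i"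
proof -
  have Kc: "K \<in> carrier_mat n n" "transpose_mat K = K" using K by (auto simp: sym_pd_def)
  have Ac: "A \<in> carrier_mat n n" using A by (auto simp: sym_pd_def)
  obtain vA lA where esA: "gen_eigsys n K A n vA lA" using gen_eigsys_exists[OF Kc A] by blast
  obtain vB lB where esB: "gen_eigsys n K B n vB lB" using gen_eigsys_exists[OF Kc B] by blast
  have "\<And>j. j < n \<Longrightarrow> 0 \<le> lA j" using gen_eigsys_eigenvalue_pos[OF K Ac esA] less_imp_le by blast
  from gen_eigsys_sorted_compare[OF Kc(1) A esA this B esB AB i] show ?thesis
    unfolding gen_eig_gen_eigsys[OF Kc(1) A esA] gen_eig_gen_eigsys[OF Kc(1) B esB] .
qed

lemma gen_eig_sqrt_ratio_bounds:
  assumes K: "sym_pd n K" and M: "sym_pd n M" and Mbar: "sym_pd n Mbar" and c: "0 \<le> c"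
    and lower: "\<And>x. x \<in> carrier_vec n \<Longrightarrow> x \<bullet> (M *\<^sub>v x) \<le> x \<bullet> (Mbar *\<^sub>v x)"
    and upper: "\<And>x. x \<in> carrier_vec n \<Longrightarrow> x \<bullet> (Mbar *\<^sub>v x) \<le> (1 + c) * (x \<bullet> (M *\<^sub>v x))"
    and i: "1 \<le> i" "i \<le> n"
  shows "1 \<le> sqrt (gen_eig K M i) / sqrt (gen_eig K Mbar i)"
    and "sqrt (gen_eig K M i) / sqrt (gen_eig K Mbar i) \<le> sqrt (1 + c)"
proof -
  have "gen_eig K Mbar i \<le> 1 * gen_eig K M i"
    using lower by (intro gen_eig_le_of_quad_form_le[OF K M Mbar _ _ i]) auto
  moreover have "gen_eig K M i \<le> (1 + c) * gen_eig K Mbar i"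
    using upper c by (intro gen_eig_le_of_quad_form_le[OF K Mbar M _ _ i]) auto
  moreover have "0 < sqrt (gen_eig K Mbar i)" using gen_eig_pos[OF K Mbar i] by simp
  ultimately show "1 \<le> sqrt (gen_eig K M i) / sqrt (gen_eig K Mbar i)"
    and "sqrt (gen_eig K M i) / sqrt (gen_eig K Mbar i) \<le> sqrt (1 + c)"
    by (simp_all add: le_divide_eq_1_pos pos_divide_le_eq flip: real_sqrt_mult)
qed

lemma eigenvalue_quad_form:
  assumes M: "M \<in> carrier_mat n n" and ev: "(e :: real) \<in> spectrum M"
  obtains x where "x \<in> carrier_vec n" "x \<noteq> 0\<^sub>v n" "x \<bullet> (M *\<^sub>v x) = e * (x \<bullet> x)"
proof -
  obtain x where "x \<in> carrier_vec n" "x \<noteq> 0\<^sub>v n" "M *\<^sub>v x = e \<cdot>\<^sub>v x"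
    using ev M unfolding spectrum_def eigenvalue_def eigenvector_def by auto
  with that show thesis by simp
qed

lemma sym_spectrum_Min_Max:
  fixes M :: "real mat"
  assumes M: "M \<in> carrier_mat n n" "transpose_mat M = M" and n: "0 < n"
  shows "finite (spectrum M)" "spectrum M \<noteq> {}"
    and "\<And>x. x \<in> carrier_vec n \<Longrightarrow> Min (spectrum M) * (x \<bullet> x) \<le> x \<bullet> (M *\<^sub>v x)"
    and "\<And>x. x \<in> carrier_vec n \<Longrightarrow> x \<bullet> (M *\<^sub>v x) \<le> Max (spectrum M) * (x \<bullet> x)"
proof -
  have I: "1\<^sub>m n \<in> carrier_mat n n" "transpose_mat (1\<^sub>m n :: real mat) = 1\<^sub>m n" by auto
  obtain v l where es: "gen_eigsys n M (1\<^sub>m n) n v l"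
    using gen_eigsys_exists[OF M sym_pd_one_mat] by blast
  note spec = spectrum_gen_eigsys_one[OF M es]
  show "finite (spectrum M)" "spectrum M \<noteq> {}" unfolding spec using n by auto
  show "Min (spectrum M) * (x \<bullet> x) \<le> x \<bullet> (M *\<^sub>v x)" if "x \<in> carrier_vec n" for x
    using gen_eigsys_quad_form_bounds(1)[OF M(1) I es that n] that unfolding spec by simp
  show "x \<bullet> (M *\<^sub>v x) \<le> Max (spectrum M) * (x \<bullet> x)" if "x \<in> carrier_vec n" for x
    using gen_eigsys_quad_form_bounds(2)[OF M(1) I es that n] that unfolding spec by simp
qed

lemma sym_pd_spectrum_pos:
  assumes M: "sym_pd n M" and e: "e \<in> spectrum M"
  shows "0 < e"
proof -
  have Mc: "M \<in> carrier_mat n n" using M by (simp add: sym_pd_def)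
  obtain x where x: "x \<in> carrier_vec n" "x \<noteq> 0\<^sub>v n" "x \<bullet> (M *\<^sub>v x) = e * (x \<bullet> x)"
    using eigenvalue_quad_form[OF Mc e] .
  moreover have "0 < x \<bullet> x" using sym_pd_one_mat x(1,2) by (auto simp: sym_pd_def)
  ultimately show ?thesis using M by (auto simp: sym_pd_def zero_less_mult_iff)
qed

lemma cond_ratio_le:
  assumes M: "sym_pd n M" and Mbar: "sym_pd n Mbar" and c: "0 \<le> c"
    and lower: "\<And>x. x \<in> carrier_vec n \<Longrightarrow> x \<bullet> (M *\<^sub>v x) \<le> x \<bullet> (Mbar *\<^sub>v x)"
    and upper: "\<And>x. x \<in> carrier_vec n \<Longrightarrow> x \<bullet> (Mbar *\<^sub>v x) \<le> (1 + c) * (x \<bullet> (M *\<^sub>v x))"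
  shows "cond Mbar / cond M \<le> 1 + c"
proof (cases "n = 0")
  case True
  then have "Mbar = M" using M Mbar by (intro eq_matI) (auto simp: sym_pd_def)
  then show ?thesis using c by (cases "cond M = 0") auto
next
  case False
  have Mc: "M \<in> carrier_mat n n" "transpose_mat M = M" using M by (auto simp: sym_pd_def)
  have Mbc: "Mbar \<in> carrier_mat n n" "transpose_mat Mbar = Mbar" using Mbar by (auto simp: sym_pd_def)
  have n: "0 < n" using False by simp
  note specM = sym_spectrum_Min_Max[OF Mc n] and specMb = sym_spectrum_Min_Max[OF Mbc n]
  define mn mx where "mn = Min (spectrum M)" and "mx = Max (spectrum M)"
  have mn0: "0 < mn"
    unfolding mn_def using specM(1,2) sym_pd_spectrum_pos[OF M] by (subst Min_gr_iff) auto
  have mnmx: "mn \<le> mx" unfolding mn_def mx_def using specM(1,2) by (meson Max_ge Min_in)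
  have bounds: "mn \<le> e \<and> e \<le> (1 + c) * mx" if e: "e \<in> spectrum Mbar" for e
  proof -
    obtain x where x: "x \<in> carrier_vec n" "x \<noteq> 0\<^sub>v n" "x \<bullet> (Mbar *\<^sub>v x) = e * (x \<bullet> x)"
      using eigenvalue_quad_form[OF Mbc(1) e] .
    have "0 < x \<bullet> x" using sym_pd_one_mat x(1,2) by (auto simp: sym_pd_def)
    moreover have "mn * (x \<bullet> x) \<le> e * (x \<bullet> x)"
      using specM(3)[OF x(1)] lower[OF x(1)] x(3) by (simp add: mn_def)
    moreover have "e * (x \<bullet> x) \<le> ((1 + c) * mx) * (x \<bullet> x)"
      using specM(4)[OF x(1)] upper[OF x(1)] x(3) c
      by (simp add: mx_def) (smt (verit) mult.assoc mult_left_mono)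
    ultimately show ?thesis by simp
  qed
  have "cond Mbar \<le> ((1 + c) * mx) / mn"
    unfolding cond_def using specMb(1,2) bounds mn0 c mnmx
    by (intro frac_le) (auto simp: Max_le_iff Min_ge_iff intro: order.trans[OF mn0[THEN less_imp_le]])
  moreover have cM: "cond M = mx / mn" by (simp add: cond_def mn_def mx_def)
  ultimately have "cond Mbar \<le> (1 + c) * cond M" by simp
  moreover have "0 < cond M" using cM mn0 mnmx by simp
  ultimately show ?thesis by (simp add: pos_divide_le_eq)
qed

section \<open>Assembly\<close>

lemma assemble_carrier [simp]: "assemble n N L A \<in> carrier_mat n n"
  unfolding assemble_def by auto

lemma quad_form_transpose_mult_mult:
  fixes L A :: "real mat"
  assumes L: "L \<in> carrier_mat m n" and A: "A \<in> carrier_mat m m" and x: "x \<in> carrier_vec n"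
  shows "x \<bullet> ((transpose_mat L * A * L) *\<^sub>v x) = (L *\<^sub>v x) \<bullet> (A *\<^sub>v (L *\<^sub>v x))"
proof -
  have Lx: "L *\<^sub>v x \<in> carrier_vec m" and ALx: "A *\<^sub>v (L *\<^sub>v x) \<in> carrier_vec m"
    using L A x by auto
  have "(transpose_mat L * A * L) *\<^sub>v x = transpose_mat L *\<^sub>v (A *\<^sub>v (L *\<^sub>v x))"
    using L A x by (simp add: assoc_mult_mat_vec[of _ n m _ n] assoc_mult_mat_vec[of _ n m _ m])
  then have "x \<bullet> ((transpose_mat L * A * L) *\<^sub>v x) = (A *\<^sub>v (L *\<^sub>v x)) \<bullet> (L *\<^sub>v x)"
    using transpose_vec_mult_scalar[OF L x ALx] L x ALx by (simp add: comm_scalar_prod[of _ n])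
  then show ?thesis using Lx ALx by (simp add: comm_scalar_prod[of _ m])
qed

lemma assemble_quad_form:
  assumes L: "\<And>e. e < N \<Longrightarrow> L e \<in> carrier_mat m n" and A: "\<And>e. e < N \<Longrightarrow> A e \<in> carrier_mat m m"
    and x: "x \<in> carrier_vec n"
  shows "x \<bullet> (assemble n N L A *\<^sub>v x) = (\<Sum>e<N. (L e *\<^sub>v x) \<bullet> (A e *\<^sub>v (L e *\<^sub>v x)))"
proof -
  define Ae where "Ae e = transpose_mat (L e) * A e * L e" for e
  have Ae: "Ae e \<in> carrier_mat n n" if "e < N" for e
    unfolding Ae_def using L[OF that] A[OF that] by auto
  have "x \<bullet> (assemble n N L A *\<^sub>v x) = (\<Sum>i<n. \<Sum>j<n. x $ i * (\<Sum>e<N. Ae e $$ (i,j)) * x $ j)"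
    unfolding quad_form_expand[OF assemble_carrier x] by (simp add: assemble_def Ae_def)
  also have "\<dots> = (\<Sum>e<N. \<Sum>i<n. \<Sum>j<n. x $ i * Ae e $$ (i,j) * x $ j)"
    by (simp add: sum_distrib_left sum_distrib_right sum.swap[of _ "{..<N}"] ac_simps)
  also have "\<dots> = (\<Sum>e<N. x \<bullet> (Ae e *\<^sub>v x))"
    using quad_form_expand[OF Ae x] by simp
  also have "\<dots> = (\<Sum>e<N. (L e *\<^sub>v x) \<bullet> (A e *\<^sub>v (L e *\<^sub>v x)))"
    unfolding Ae_def using quad_form_transpose_mult_mult[OF L A x] by simp
  finally show ?thesis .
qed

lemma assemble_quad_form_le:
  assumes L: "\<And>e. e < N \<Longrightarrow> L e \<in> carrier_mat m n"
    and A: "\<And>e. e < N \<Longrightarrow> A e \<in> carrier_mat m m" and B: "\<And>e. e < N \<Longrightarrow> B e \<in> carrier_mat m m"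
    and AB: "\<And>e y. e < N \<Longrightarrow> y \<in> carrier_vec m \<Longrightarrow> y \<bullet> (A e *\<^sub>v y) \<le> c * (y \<bullet> (B e *\<^sub>v y))"
    and x: "x \<in> carrier_vec n"
  shows "x \<bullet> (assemble n N L A *\<^sub>v x) \<le> c * (x \<bullet> (assemble n N L B *\<^sub>v x))"
proof -
  have "x \<bullet> (assemble n N L A *\<^sub>v x) = (\<Sum>e<N. (L e *\<^sub>v x) \<bullet> (A e *\<^sub>v (L e *\<^sub>v x)))"
    by (rule assemble_quad_form[OF L A x])
  also have "\<dots> \<le> (\<Sum>e<N. c * ((L e *\<^sub>v x) \<bullet> (B e *\<^sub>v (L e *\<^sub>v x))))"
    using AB L x by (intro sum_mono) (metis lessThan_iff mult_mat_vec_carrier)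
  also have "\<dots> = c * (x \<bullet> (assemble n N L B *\<^sub>v x))"
    by (simp add: assemble_quad_form[OF L B x] sum_distrib_left)
  finally show ?thesis .
qed

lemma assemble_sym:
  assumes L: "\<And>e. e < N \<Longrightarrow> L e \<in> carrier_mat m n"
    and A: "\<And>e. e < N \<Longrightarrow> A e \<in> carrier_mat m m" "\<And>e. e < N \<Longrightarrow> transpose_mat (A e) = A e"
  shows "transpose_mat (assemble n N L A) = assemble n N L A"
proof -
  have sym: "transpose_mat (transpose_mat (L e) * A e * L e) = transpose_mat (L e) * A e * L e"
    if e: "e < N" for e
  proof -
    have Lt: "transpose_mat (L e) \<in> carrier_mat n m" using L[OF e] by simp
    have "transpose_mat (transpose_mat (L e) * A e * L e)
        = transpose_mat (L e) * transpose_mat (transpose_mat (L e) * A e)"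
      using Lt A(1)[OF e] L[OF e] by (intro transpose_mult[of _ n m _ n]) auto
    also have "transpose_mat (transpose_mat (L e) * A e) = A e * L e"
      using transpose_mult[OF Lt A(1)[OF e]] A(2)[OF e] by simp
    finally show ?thesis
      using Lt A(1)[OF e] L[OF e] by (simp add: assoc_mult_mat[of _ n m _ m _ n])
  qed
  have "(transpose_mat (L e) * A e * L e) $$ (j,i) = (transpose_mat (L e) * A e * L e) $$ (i,j)"
    if "e < N" "i < n" "j < n" for e i j
  proof -
    have "transpose_mat (L e) * A e * L e \<in> carrier_mat n n" using L[OF that(1)] A(1)[OF that(1)] by auto
    then have "(transpose_mat (L e) * A e * L e) $$ (j,i) = transpose_mat (transpose_mat (L e) * A e * L e) $$ (i,j)"
      using that(2,3) by (metis carrier_matD(1,2) index_transpose_mat(1))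
    then show ?thesis using sym[OF that(1)] by simp
  qed
  then show ?thesis by (intro eq_matI) (auto simp: assemble_def intro!: sum.cong)
qed

lemma bool_mat_mult_vec:
  assumes x: "x \<in> carrier_vec n" and idx: "\<And>k. k < m \<Longrightarrow> idx k < n"
  shows "bool_mat m n idx *\<^sub>v x = vec m (\<lambda>k. x $ idx k)"
proof (rule eq_vecI)
  fix k assume "k < dim_vec (vec m (\<lambda>k. x $ idx k))"
  then have k: "k < m" by simp
  have "(bool_mat m n idx *\<^sub>v x) $ k = (\<Sum>j\<in>{0..<n}. (if j = idx k then 1 else 0) * x $ j)"
    using k x by (simp add: bool_mat_def scalar_prod_def)
  also have "\<dots> = (\<Sum>j\<in>{0..<n}. if j = idx k then x $ j else 0)" by (rule sum.cong) auto
  finally have "(bool_mat m n idx *\<^sub>v x) $ k = (\<Sum>j\<in>{0..<n}. if j = idx k then x $ j else 0)" .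
  then show "(bool_mat m n idx *\<^sub>v x) $ k = vec m (\<lambda>k. x $ idx k) $ k" using k idx[OF k] by simp
qed (auto simp: bool_mat_def)

lemma assemble_sym_pd:
  assumes idx_range: "\<And>e k. e < N \<Longrightarrow> k < m \<Longrightarrow> idx e k < n"
    and idx_cover: "\<And>j. j < n \<Longrightarrow> \<exists>e<N. \<exists>k<m. idx e k = j"
    and A: "\<And>e. e < N \<Longrightarrow> sym_pd m (A e)"
  shows "sym_pd n (assemble n N (\<lambda>e. bool_mat m n (idx e)) A)"
  unfolding sym_pd_def
proof (intro conjI ballI impI)
  let ?L = "\<lambda>e. bool_mat m n (idx e)"
  have L: "\<And>e. e < N \<Longrightarrow> ?L e \<in> carrier_mat m n" by (simp add: bool_mat_def)
  have Ac: "\<And>e. e < N \<Longrightarrow> A e \<in> carrier_mat m m" "\<And>e. e < N \<Longrightarrow> transpose_mat (A e) = A e"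
    using A by (auto simp: sym_pd_def)
  show "assemble n N ?L A \<in> carrier_mat n n" by simp
  show "transpose_mat (assemble n N ?L A) = assemble n N ?L A" by (rule assemble_sym[OF L Ac])
  fix x :: "real vec" assume x: "x \<in> carrier_vec n" "x \<noteq> 0\<^sub>v n"
  obtain j where j: "j < n" "x $ j \<noteq> 0" using nonzero_vec_nonzero_entry[OF x] .
  obtain e k where ek: "e < N" "k < m" "idx e k = j" using idx_cover[OF j(1)] by blast
  have "?L e *\<^sub>v x \<noteq> 0\<^sub>v m"
    using bool_mat_mult_vec[OF x(1), of m "idx e"] idx_range[OF ek(1)] ek j(2)
    by (metis index_vec index_zero_vec(1))
  moreover have Lx: "?L e' *\<^sub>v x \<in> carrier_vec m" for e'
    by (rule mult_mat_vec_carrier[OF _ x(1)]) (simp add: bool_mat_def)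
  ultimately have "0 < (?L e *\<^sub>v x) \<bullet> (A e *\<^sub>v (?L e *\<^sub>v x))"
    using A[OF ek(1)] unfolding sym_pd_def by blast
  moreover have "0 \<le> (?L e' *\<^sub>v x) \<bullet> (A e' *\<^sub>v (?L e' *\<^sub>v x))" if "e' < N" for e'
    using A[OF that] Lx[of e'] Ac(1)[OF that] unfolding sym_pd_def
    by (cases "?L e' *\<^sub>v x = 0\<^sub>v m") (auto intro: less_imp_le)
  ultimately have "0 < (\<Sum>e<N. (?L e *\<^sub>v x) \<bullet> (A e *\<^sub>v (?L e *\<^sub>v x)))"
    using ek(1) by (intro sum_pos2[of _ e]) auto
  then show "0 < x \<bullet> (assemble n N ?L A *\<^sub>v x)"
    by (simp add: assemble_quad_form[OF L Ac(1) x(1)])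
qed

lemma sym_pd_of_quad_form_le:
  assumes A: "sym_pd n A" and B: "B \<in> carrier_mat n n" "transpose_mat B = B"
    and AB: "\<And>x. x \<in> carrier_vec n \<Longrightarrow> x \<bullet> (A *\<^sub>v x) \<le> x \<bullet> (B *\<^sub>v x)"
  shows "sym_pd n B"
  using A B AB unfolding sym_pd_def by (meson less_le_trans)

section \<open>Lumped and perturbed element mass matrices\<close>

lemma sum_lessThan_mult_blocks: "(\<Sum>i<p * q. f i) = (\<Sum>b<p. \<Sum>r<q. f (q * b + r :: nat))"
proof (induct p)
  case (Suc p)
  have "(\<Sum>i<Suc p * q. f i) = (\<Sum>i<p * q + q. f i)" by (simp add: add.commute)
  also have "\<dots> = (\<Sum>i<p * q. f i) + (\<Sum>r<q. f (q * p + r))"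
    by (simp add: sum_lessThan_add mult.commute)
  finally show ?case using Suc by simp
qed simp

lemma block_index_less: "b < p \<Longrightarrow> r < q \<Longrightarrow> q * b + r < p * (q :: nat)"
proof -
  assume "b < p" "r < q"
  then have "q * b + r < q * Suc b" by simp
  also have "\<dots> \<le> q * p" using \<open>b < p\<close> by (intro mult_le_mono2) simp
  finally show ?thesis by (simp add: mult.commute)
qed

lemma kron_one_carrier: "X \<in> carrier_mat q q \<Longrightarrow> kron (1\<^sub>m p) X \<in> carrier_mat (p * q) (p * q)"
  unfolding kron_def by auto

lemma transpose_kron_one:
  assumes "X \<in> carrier_mat q q" "transpose_mat X = X"
  shows "transpose_mat (kron (1\<^sub>m p) X) = kron (1\<^sub>m p) X"
proof (rule eq_matI)
  fix i j assume "i < dim_row (kron (1\<^sub>m p) X)" "j < dim_col (kron (1\<^sub>m p) X)"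
  then have ij: "i < p * q" "j < p * q" using assms(1) by (auto simp: kron_def)
  moreover have "0 < q" using ij by (cases q) auto
  ultimately have "i div q < p" "j div q < p" "i mod q < q" "j mod q < q"
    by (auto simp: less_mult_imp_div_less mult.commute)
  moreover have "kron (1\<^sub>m p) X $$ (a, b) = (if a div q = b div q then X $$ (a mod q, b mod q) else 0)"
    if "a < p * q" "b < p * q" "a div q < p" "b div q < p" for a b
    using that assms(1) by (simp add: kron_def)
  moreover have "X $$ (j mod q, i mod q) = X $$ (i mod q, j mod q)"
    using assms \<open>i mod q < q\<close> \<open>j mod q < q\<close> by (metis carrier_matD(1,2) index_transpose_mat(1))
  ultimately show "transpose_mat (kron (1\<^sub>m p) X) $$ (i,j) = kron (1\<^sub>m p) X $$ (i,j)"
    using kron_one_carrier[OF assms(1), of p] ij by auto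
qed (use kron_one_carrier[OF assms(1), of p] in auto)

definition vec_block :: "nat \<Rightarrow> nat \<Rightarrow> 'a vec \<Rightarrow> 'a vec" where
  "vec_block q b y = vec q (\<lambda>r. y $ (q * b + r))"

lemma quad_form_kron_one:
  assumes X: "X \<in> carrier_mat q q" and y: "y \<in> carrier_vec (p * q)"
  shows "y \<bullet> (kron (1\<^sub>m p) X *\<^sub>v y) = (\<Sum>b<p. vec_block q b y \<bullet> (X *\<^sub>v vec_block q b y))"
proof -
  have entry: "kron (1\<^sub>m p) X $$ (q * b + r, q * b' + r') = (if b = b' then X $$ (r, r') else 0)"
    if "b < p" "b' < p" "r < q" "r' < q" for b b' r r'
    using that X block_index_less[of b p r q] block_index_less[of b' p r' q] by (simp add: kron_def)
  have "y \<bullet> (kron (1\<^sub>m p) X *\<^sub>v y)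
      = (\<Sum>b<p. \<Sum>r<q. \<Sum>b'<p. \<Sum>r'<q. y $ (q*b+r) * kron (1\<^sub>m p) X $$ (q*b+r, q*b'+r') * y $ (q*b'+r'))"
    unfolding quad_form_expand[OF kron_one_carrier[OF X] y] sum_lessThan_mult_blocks ..
  also have "\<dots> = (\<Sum>b<p. \<Sum>r<q. \<Sum>r'<q. y $ (q*b+r) * X $$ (r, r') * y $ (q*b+r'))"
  proof (rule sum.cong[OF refl], rule sum.cong[OF refl])
    fix b r assume b: "b \<in> {..<p}" and r: "r \<in> {..<q}"
    have "(\<Sum>b'<p. \<Sum>r'<q. y $ (q*b+r) * kron (1\<^sub>m p) X $$ (q*b+r, q*b'+r') * y $ (q*b'+r'))
        = (\<Sum>b'<p. if b = b' then (\<Sum>r'<q. y $ (q*b+r) * X $$ (r, r') * y $ (q*b+r')) else 0)"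
      using b r entry by (intro sum.cong refl) auto
    also have "\<dots> = (\<Sum>r'<q. y $ (q*b+r) * X $$ (r, r') * y $ (q*b+r'))" using b by simp
    finally show "(\<Sum>b'<p. \<Sum>r'<q. y $ (q*b+r) * kron (1\<^sub>m p) X $$ (q*b+r, q*b'+r') * y $ (q*b'+r'))
        = (\<Sum>r'<q. y $ (q*b+r) * X $$ (r, r') * y $ (q*b+r'))" .
  qed
  also have "\<dots> = (\<Sum>b<p. vec_block q b y \<bullet> (X *\<^sub>v vec_block q b y))"
  proof (rule sum.cong[OF refl])
    fix b
    have "vec_block q b y \<in> carrier_vec q" by (simp add: vec_block_def)
    from quad_form_expand[OF X this]
    show "(\<Sum>r<q. \<Sum>r'<q. y $ (q*b+r) * X $$ (r, r') * y $ (q*b+r'))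
      = vec_block q b y \<bullet> (X *\<^sub>v vec_block q b y)" by (simp add: vec_block_def)
  qed
  finally show ?thesis .
qed

lemma quad_form_smult_one:
  fixes z :: "real vec"
  assumes z: "z \<in> carrier_vec q"
  shows "z \<bullet> ((a \<cdot>\<^sub>m 1\<^sub>m q) *\<^sub>v z) = a * (z \<bullet> z)"
proof -
  have "(a \<cdot>\<^sub>m 1\<^sub>m q) *\<^sub>v z = a \<cdot>\<^sub>v z" using z by (simp add: smult_mat_mult_mat_vec[of _ q q])
  then show ?thesis using z by simp
qed

lemma quad_form_lumping:
  fixes z :: "real vec"
  assumes z: "z \<in> carrier_vec q"
  shows "z \<bullet> ((real q \<cdot>\<^sub>m 1\<^sub>m q - mat q q (\<lambda>_. 1)) *\<^sub>v z) = real q * (z \<bullet> z) - (\<Sum>r<q. z $ r) ^ 2"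
proof -
  have "mat q q (\<lambda>_. 1) *\<^sub>v z = vec q (\<lambda>_. \<Sum>r<q. z $ r)"
    using z by (intro eq_vecI) (auto simp: scalar_prod_def lessThan_atLeast0)
  moreover have "z \<bullet> vec q (\<lambda>_. s) = s * (\<Sum>r<q. z $ r)" for s
    using z by (simp add: scalar_prod_def lessThan_atLeast0 sum_distrib_left mult.commute)
  ultimately show ?thesis
    using z by (simp add: minus_mult_distrib_mat_vec[of _ q q] smult_mat_mult_mat_vec[of _ q q]
        scalar_prod_minus_distrib[of _ q] power2_eq_square)
qed

lemma square_sum_le_mult_sum_squares:
  fixes z :: "nat \<Rightarrow> real"
  shows "(\<Sum>r<q. z r) ^ 2 \<le> real q * (\<Sum>r<q. z r ^ 2)"
proof -
  have "(\<Sum>r<q. z r) ^ 2 = (\<Sum>r<q. \<Sum>s<q. z r * z s)"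
    by (simp add: power2_eq_square sum_product)
  also have "\<dots> \<le> (\<Sum>r<q. \<Sum>s<q. (z r ^ 2 + z s ^ 2) / 2)"
  proof (intro sum_mono)
    fix r s
    have "0 \<le> (z r - z s) ^ 2" by simp
    then show "z r * z s \<le> (z r ^ 2 + z s ^ 2) / 2" by (simp add: power2_diff field_simps)
  qed
  also have "\<dots> = real q * (\<Sum>r<q. z r ^ 2)"
    by (simp add: sum.distrib add_divide_distrib sum_divide_distrib[symmetric] sum_distrib_left)
  finally show ?thesis .
qed

lemma scalar_prod_self_sum: "z \<in> carrier_vec q \<Longrightarrow> z \<bullet> z = (\<Sum>r<q. z $ r ^ 2)"
  for z :: "real vec"
  by (simp add: scalar_prod_def lessThan_atLeast0 power2_eq_square)

lemma kron_one_smult_one: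
  "kron (1\<^sub>m p) (a \<cdot>\<^sub>m 1\<^sub>m q) = (a :: real) \<cdot>\<^sub>m 1\<^sub>m (p * q)"
proof (rule eq_matI)
  fix i j assume "i < dim_row (a \<cdot>\<^sub>m 1\<^sub>m (p * q))" "j < dim_col (a \<cdot>\<^sub>m 1\<^sub>m (p * q))"
  then have ij: "i < p * q" "j < p * q" by auto
  then have "0 < q" by (cases q) auto
  then have "i div q < p" "j div q < p" "i mod q < q" "j mod q < q"
    using ij by (auto simp: less_mult_imp_div_less mult.commute)
  moreover have "i = j \<longleftrightarrow> i div q = j div q \<and> i mod q = j mod q" by (metis div_mult_mod_eq)
  ultimately show "kron (1\<^sub>m p) (a \<cdot>\<^sub>m 1\<^sub>m q) $$ (i, j) = (a \<cdot>\<^sub>m 1\<^sub>m (p * q)) $$ (i, j)"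
    using ij by (auto simp: kron_def)
qed (auto simp: kron_def)

lemma sum_vec_block_scalar_prod:
  fixes y :: "real vec"
  assumes y: "y \<in> carrier_vec (p * q)"
  shows "(\<Sum>b<p. vec_block q b y \<bullet> vec_block q b y) = y \<bullet> y"
proof -
  have "(\<Sum>b<p. vec_block q b y \<bullet> vec_block q b y) = (\<Sum>b<p. vec_block q b y \<bullet> ((1 \<cdot>\<^sub>m 1\<^sub>m q) *\<^sub>v vec_block q b y))"
    by (simp add: quad_form_smult_one vec_block_def)
  also have "\<dots> = y \<bullet> (kron (1\<^sub>m p) (1 \<cdot>\<^sub>m 1\<^sub>m q) *\<^sub>v y)"
    by (rule quad_form_kron_one[OF _ y, symmetric]) simp
  also have "\<dots> = y \<bullet> ((1 \<cdot>\<^sub>m 1\<^sub>m (p * q)) *\<^sub>v y)" unfolding kron_one_smult_one ..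
  also have "\<dots> = y \<bullet> y" using quad_form_smult_one[OF y] by simp
  finally show ?thesis .
qed

lemma lumping_quad_form_bounds:
  fixes z :: "real vec"
  assumes z: "z \<in> carrier_vec q"
  shows "0 \<le> z \<bullet> ((real q \<cdot>\<^sub>m 1\<^sub>m q - mat q q (\<lambda>_. 1)) *\<^sub>v z)"
    and "z \<bullet> ((real q \<cdot>\<^sub>m 1\<^sub>m q - mat q q (\<lambda>_. 1)) *\<^sub>v z) \<le> real q * (z \<bullet> z)"
  using square_sum_le_mult_sum_squares[where q = q and z = "\<lambda>r. z $ r"] scalar_prod_self_sum[OF z]
  unfolding quad_form_lumping[OF z] by simp_all

lemma kron_lumping_quad_form_bounds:
  fixes y :: "real vec"
  assumes c: "0 \<le> c" and y: "y \<in> carrier_vec (p * q)"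
  defines "E \<equiv> kron (1\<^sub>m p) (c \<cdot>\<^sub>m (real q \<cdot>\<^sub>m 1\<^sub>m q - mat q q (\<lambda>_. 1)))"
  shows "0 \<le> y \<bullet> (E *\<^sub>v y)" and "y \<bullet> (E *\<^sub>v y) \<le> c * real q * (y \<bullet> y)"
proof -
  let ?X = "real q \<cdot>\<^sub>m 1\<^sub>m q - mat q q (\<lambda>_. 1)"
  have X: "?X \<in> carrier_mat q q" by auto
  have zb: "vec_block q b y \<in> carrier_vec q" for b by (simp add: vec_block_def)
  have "y \<bullet> (E *\<^sub>v y) = (\<Sum>b<p. vec_block q b y \<bullet> ((c \<cdot>\<^sub>m ?X) *\<^sub>v vec_block q b y))"
    unfolding E_def by (rule quad_form_kron_one[OF _ y]) auto
  also have "\<dots> = (\<Sum>b<p. c * (vec_block q b y \<bullet> (?X *\<^sub>v vec_block q b y)))"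
    using X zb by (simp add: smult_mat_mult_mat_vec[of _ q q])
  finally have E: "y \<bullet> (E *\<^sub>v y) = (\<Sum>b<p. c * (vec_block q b y \<bullet> (?X *\<^sub>v vec_block q b y)))" .
  show "0 \<le> y \<bullet> (E *\<^sub>v y)"
    unfolding E using c lumping_quad_form_bounds(1)[OF zb] by (simp add: sum_nonneg)
  have "y \<bullet> (E *\<^sub>v y) \<le> (\<Sum>b<p. c * (real q * (vec_block q b y \<bullet> vec_block q b y)))"
    unfolding E using c lumping_quad_form_bounds(2)[OF zb] by (intro sum_mono mult_left_mono) auto
  also have "\<dots> = c * real q * (\<Sum>b<p. vec_block q b y \<bullet> vec_block q b y)"
    by (simp add: sum_distrib_left mult.assoc)
  also have "\<dots> = c * real q * (y \<bullet> y)" unfolding sum_vec_block_scalar_prod[OF y] ..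
  finally show "y \<bullet> (E *\<^sub>v y) \<le> c * real q * (y \<bullet> y)" .
qed

lemma perturbed_lumped_mass_element:
  fixes m \<beta> :: real
  assumes m: "0 < m" and \<beta>: "0 \<le> \<beta>"
  defines "Me \<equiv> kron (1\<^sub>m 3) ((m / 8) \<cdot>\<^sub>m 1\<^sub>m 8)"
    and "Ee \<equiv> kron (1\<^sub>m 3) ((\<beta> * m / 56) \<cdot>\<^sub>m (8 \<cdot>\<^sub>m 1\<^sub>m 8 - mat 8 8 (\<lambda>_. 1)))"
  shows "sym_pd 24 Me" and "Me + Ee \<in> carrier_mat 24 24" and "transpose_mat (Me + Ee) = Me + Ee"
    and "\<And>y. y \<in> carrier_vec 24 \<Longrightarrow> y \<bullet> (Me *\<^sub>v y) \<le> 1 * (y \<bullet> ((Me + Ee) *\<^sub>v y))"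
    and "\<And>y. y \<in> carrier_vec 24 \<Longrightarrow> y \<bullet> ((Me + Ee) *\<^sub>v y) \<le> (1 + 8 / 7 * \<beta>) * (y \<bullet> (Me *\<^sub>v y))"
proof -
  have Me_eq: "Me = (m / 8) \<cdot>\<^sub>m 1\<^sub>m 24"
    unfolding Me_def kron_one_smult_one by simp
  have Ee_eq: "Ee = kron (1\<^sub>m 3) ((\<beta> * m / 56) \<cdot>\<^sub>m (real 8 \<cdot>\<^sub>m 1\<^sub>m 8 - mat 8 8 (\<lambda>_. 1)))"
    unfolding Ee_def by simp
  have c: "0 \<le> \<beta> * m / 56" using m \<beta> by simp
  have X: "(\<beta> * m / 56) \<cdot>\<^sub>m (8 \<cdot>\<^sub>m 1\<^sub>m 8 - mat 8 8 (\<lambda>_. 1)) \<in> carrier_mat 8 8"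
    "transpose_mat ((\<beta> * m / 56) \<cdot>\<^sub>m (8 \<cdot>\<^sub>m 1\<^sub>m 8 - mat 8 8 (\<lambda>_. 1)))
      = (\<beta> * m / 56) \<cdot>\<^sub>m (8 \<cdot>\<^sub>m 1\<^sub>m 8 - mat 8 8 (\<lambda>_. 1 :: real))"
    by (auto intro!: eq_matI)
  have Ee: "Ee \<in> carrier_mat 24 24" "transpose_mat Ee = Ee"
    unfolding Ee_def using kron_one_carrier[OF X(1), of 3] transpose_kron_one[OF X, of 3] by simp_all
  have quad_Me: "y \<bullet> (Me *\<^sub>v y) = m / 8 * (y \<bullet> y)" if "y \<in> carrier_vec 24" for y :: "real vec"
    unfolding Me_eq by (rule quad_form_smult_one[OF that])
  have sum_Me_Ee: "y \<bullet> ((Me + Ee) *\<^sub>v y) = y \<bullet> (Me *\<^sub>v y) + y \<bullet> (Ee *\<^sub>v y)"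
    if "y \<in> carrier_vec 24" for y
  proof -
    have Me: "Me \<in> carrier_mat 24 24" by (simp add: Me_eq)
    have "(Me + Ee) *\<^sub>v y = Me *\<^sub>v y + Ee *\<^sub>v y" by (rule add_mult_distrib_mat_vec[OF Me Ee(1) that])
    then show ?thesis using Me Ee(1) that by (simp add: scalar_prod_add_distrib[of _ 24])
  qed
  show Me: "sym_pd 24 Me"
    unfolding sym_pd_def Me_eq using sym_pd_one_mat[of 24] m
    by (auto simp: sym_pd_def smult_mat_mult_mat_vec[of _ 24 24] intro!: eq_matI)
  show "Me + Ee \<in> carrier_mat 24 24" using Ee(1) by (simp add: Me_eq)
  show "transpose_mat (Me + Ee) = Me + Ee"
    using transpose_add[of Me 24 24 Ee] Me Ee by (simp add: sym_pd_def)
  fix y :: "real vec" assume y: "y \<in> carrier_vec 24"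
  then have y': "y \<in> carrier_vec (3 * 8)" by simp
  note bounds = kron_lumping_quad_form_bounds[OF c y', folded Ee_eq]
  show "y \<bullet> (Me *\<^sub>v y) \<le> 1 * (y \<bullet> ((Me + Ee) *\<^sub>v y))"
    using bounds(1) sum_Me_Ee[OF y] by simp
  show "y \<bullet> ((Me + Ee) *\<^sub>v y) \<le> (1 + 8 / 7 * \<beta>) * (y \<bullet> (Me *\<^sub>v y))"
    using bounds(2) sum_Me_Ee[OF y] quad_Me[OF y] by (simp add: algebra_simps)
qed

theorem mainTheorem6:
  fixes n N :: nat and idx :: "nat \<Rightarrow> nat \<Rightarrow> nat" and Ke :: "nat \<Rightarrow> real mat"
    and mass :: "nat \<Rightarrow> real" and \<beta> :: real
  defines "K \<equiv> assemble n N (\<lambda>e. bool_mat 24 n (idx e)) Ke"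
    and "M \<equiv> assemble n N (\<lambda>e. bool_mat 24 n (idx e)) (\<lambda>e. kron (1\<^sub>m 3) ((mass e / 8) \<cdot>\<^sub>m 1\<^sub>m 8))"
    and "Mbar \<equiv> assemble n N (\<lambda>e. bool_mat 24 n (idx e)) (\<lambda>e. (\<lambda>e. kron (1\<^sub>m 3) ((mass e / 8) \<cdot>\<^sub>m 1\<^sub>m 8)) e + (\<lambda>e. kron (1\<^sub>m 3) ((\<beta> * mass e / 56) \<cdot>\<^sub>m (8 \<cdot>\<^sub>m 1\<^sub>m 8 - mat 8 8 (\<lambda>_. 1)))) e)"
  assumes idx_range: "\<And>e k. e < N \<Longrightarrow> k < 24 \<Longrightarrow> idx e k < n"
    and idx_inj: "\<And>e. e < N \<Longrightarrow> inj_on (idx e) {..<24}"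
    and idx_cover: "\<And>j. j < n \<Longrightarrow> \<exists>e<N. \<exists>k<24. idx e k = j"
    and Ke_psd: "\<And>e. e < N \<Longrightarrow> sym_psd 24 (Ke e)"
    and K_pd: "sym_pd n K"
    and mass_pos: "\<And>e. e < N \<Longrightarrow> mass e > 0"
    and beta_nonneg: "\<beta> \<ge> 0"
  shows "(\<forall>i \<in> {1..n}.
            1 \<le> sqrt (gen_eig K M i) / sqrt (gen_eig K Mbar i) \<and>
            sqrt (gen_eig K M i) / sqrt (gen_eig K Mbar i) \<le> sqrt (1 + 8 / 7 * \<beta>))
         \<and> cond Mbar / cond M \<le> 1 + 8 / 7 * \<beta>"
proof -
  let ?L = "\<lambda>e. bool_mat 24 n (idx e)"
  let ?Me = "\<lambda>e. kron (1\<^sub>m 3) ((mass e / 8) \<cdot>\<^sub>m 1\<^sub>m 8)"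
  let ?MEe = "\<lambda>e. ?Me e + kron (1\<^sub>m 3) ((\<beta> * mass e / 56) \<cdot>\<^sub>m (8 \<cdot>\<^sub>m 1\<^sub>m 8 - mat 8 8 (\<lambda>_. 1)))"
  have M: "M = assemble n N ?L ?Me" and Mbar: "Mbar = assemble n N ?L ?MEe"
    unfolding M_def Mbar_def by simp_all
  note elem = perturbed_lumped_mass_element[OF mass_pos beta_nonneg]
  have L: "\<And>e. e < N \<Longrightarrow> ?L e \<in> carrier_mat 24 n" by (simp add: bool_mat_def)
  have Me: "\<And>e. e < N \<Longrightarrow> ?Me e \<in> carrier_mat 24 24" using elem(1) by (simp add: sym_pd_def)
  have M_pd: "sym_pd n M" unfolding M using assemble_sym_pd[OF idx_range idx_cover elem(1)] .
  have lower: "x \<bullet> (M *\<^sub>v x) \<le> x \<bullet> (Mbar *\<^sub>v x)" if "x \<in> carrier_vec n" for x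
    using assemble_quad_form_le[OF L Me elem(2) elem(4) that] unfolding M Mbar by simp
  have upper: "x \<bullet> (Mbar *\<^sub>v x) \<le> (1 + 8 / 7 * \<beta>) * (x \<bullet> (M *\<^sub>v x))" if "x \<in> carrier_vec n" for x
    using assemble_quad_form_le[OF L elem(2) Me elem(5) that] unfolding M Mbar .
  have Mbar_pd: "sym_pd n Mbar"
    using sym_pd_of_quad_form_le[OF M_pd _ _ lower] assemble_sym[OF L elem(2,3)] unfolding Mbar by simp
  have c: "0 \<le> 8 / 7 * \<beta>" using beta_nonneg by simp
  show ?thesis
    using gen_eig_sqrt_ratio_bounds[OF K_pd M_pd Mbar_pd c lower upper]
      cond_ratio_le[OF M_pd Mbar_pd c lower upper] by auto
qed

end
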